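(* Let $q$ be a prime power, $n$ a positive integer, $\sigma$ a sesquilinear form of $\mathbb F_{q^{2n}}/\mathbb F_{q^2}$, and $C$ a coefficient matrix of a reduced form of $\sigma$. Then $\sigma$ has a diagonal coefficient matrix whose nonzero entries are $d_1,\dots,d_r$ if and only if $\operatorname{rad}\sigma=\operatorname{rad}\sigma^*$ and $C^*C^{-1}$ is conjugate to the diagonal matrix with diagonal entries $d_1^{q-1},\dots,d_r^{q-1}$.
   Context: A sesquilinear form of $\mathbb F_{q^{2n}}/\mathbb F_{q^2}$ is a map $\sigma:\mathbb F_{q^{2n}}^2\to\mathbb F_{q^2}$ that is $\mathbb F_{q^2}$-linear in the first argument and additive with $\sigma(u,cv)=c^q\sigma(u,v)$ ($c\in\mathbb F_{q^2}$) in the second. $\sigma^*(u,v)=\sigma(v,u)^q$. $\operatorname{rad}\sigma=\{u:\sigma(u,v)=0\ \forall v\}$. If $W$ is an $\mathbb F_{q^2}$-subspace with $\mathbb F_{q^{2n}}=W\oplus(\operatorname{rad}\sigma\cap\operatorname{rad}\sigma^* )$, the restriction of $\sigma$ to $W\times W$ is a reduced form of $\sigma$. The coefficient matrix of a form w.r.t. a basis $\beta_1,\dots,\beta_k$ of its domain has $(i,j)$ entry $\sigma(\beta_i,\beta_j)$. For a matrix $M$, $M^*$ is the transpose of $M$ with every entry raised to the $q$-th power. *)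

theory Defs
  imports "Jordan_Normal_Form.Matrix" "HOL-Computational_Algebra.Primes" "HOL-Library.Multiset"
begin

text \<open>Ambient field: a finite field 'a with CARD('a) = q^(2n).
  The subfield F_{q^2} is the set of fixed points of x -> x^(q^2).\<close>

definition prime_power :: "nat \<Rightarrow> bool" where
  "prime_power q \<longleftrightarrow> (\<exists>p k. prime p \<and> k > 0 \<and> q = p ^ k)"

definition subF :: "nat \<Rightarrow> 'a::field set" where
  "subF q = {x. x ^ (q^2) = x}"

definition sesquilinear :: "nat \<Rightarrow> ('a::field \<Rightarrow> 'a \<Rightarrow> 'a) \<Rightarrow> bool" where
  "sesquilinear q \<sigma> \<longleftrightarrow>
     (\<forall>u v. \<sigma> u v \<in> subF q) \<and>
     (\<forall>c\<in>subF q. \<forall>u u' v. \<sigma> (c * u + u') v = c * \<sigma> u v + \<sigma> u' v) \<and>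
     (\<forall>u v v'. \<sigma> u (v + v') = \<sigma> u v + \<sigma> u v') \<and>
     (\<forall>c\<in>subF q. \<forall>u v. \<sigma> u (c * v) = c ^ q * \<sigma> u v)"

definition adj_form :: "nat \<Rightarrow> ('a::field \<Rightarrow> 'a \<Rightarrow> 'a) \<Rightarrow> ('a \<Rightarrow> 'a \<Rightarrow> 'a)" where
  "adj_form q \<sigma> = (\<lambda>u v. (\<sigma> v u) ^ q)"

definition rad :: "('a::field \<Rightarrow> 'a \<Rightarrow> 'a) \<Rightarrow> 'a set" where
  "rad \<sigma> = {u. \<forall>v. \<sigma> u v = 0}"

definition K_span :: "nat \<Rightarrow> 'a::field list \<Rightarrow> 'a set" where
  "K_span q bs = {(\<Sum>i<length bs. c i * bs ! i) | c. \<forall>i<length bs. c i \<in> subF q}"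

definition K_indep :: "nat \<Rightarrow> 'a::field list \<Rightarrow> bool" where
  "K_indep q bs \<longleftrightarrow> (\<forall>c. (\<forall>i<length bs. c i \<in> subF q) \<and> (\<Sum>i<length bs. c i * bs ! i) = 0
                        \<longrightarrow> (\<forall>i<length bs. c i = 0))"

definition K_basis_of :: "nat \<Rightarrow> 'a::field set \<Rightarrow> 'a list \<Rightarrow> bool" where
  "K_basis_of q W bs \<longleftrightarrow> K_indep q bs \<and> K_span q bs = W"

text \<open>bs is an F_{q^2}-basis of a subspace W with F = W (+) (rad sigma \<inter> rad sigma*),
  i.e. a basis of the domain of a reduced form of sigma.\<close>
definition reduced_form_basis :: "nat \<Rightarrow> ('a::field \<Rightarrow> 'a \<Rightarrow> 'a) \<Rightarrow> 'a list \<Rightarrow> bool" where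
  "reduced_form_basis q \<sigma> bs \<longleftrightarrow>
     (let R = rad \<sigma> \<inter> rad (adj_form q \<sigma>); W = K_span q bs in
       K_indep q bs \<and> W \<inter> R = {0} \<and> {w + r | w r. w \<in> W \<and> r \<in> R} = UNIV)"

definition coeff_mat :: "('a::field \<Rightarrow> 'a \<Rightarrow> 'a) \<Rightarrow> 'a list \<Rightarrow> 'a mat" where
  "coeff_mat \<sigma> bs = mat (length bs) (length bs) (\<lambda>(i, j). \<sigma> (bs ! i) (bs ! j))"

definition star_mat :: "nat \<Rightarrow> 'a::field mat \<Rightarrow> 'a mat" where
  "star_mat q M = transpose_mat (map_mat (\<lambda>x. x ^ q) M)"

definition has_diag_coeff_mat :: "nat \<Rightarrow> ('a::field \<Rightarrow> 'a \<Rightarrow> 'a) \<Rightarrow> 'a list \<Rightarrow> bool" where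
  "has_diag_coeff_mat q \<sigma> ds \<longleftrightarrow>
     (\<exists>bs. K_basis_of q UNIV bs \<and> diagonal_mat (coeff_mat \<sigma> bs) \<and>
        mset (filter (\<lambda>x. x \<noteq> 0) (map (\<lambda>i. \<sigma> (bs ! i) (bs ! i)) [0..<length bs])) = mset ds)"

definition similar_over :: "'a::field set \<Rightarrow> 'a mat \<Rightarrow> 'a mat \<Rightarrow> bool" where
  "similar_over S A B \<longleftrightarrow>
     (\<exists>P Q. similar_mat_wit A B P Q \<and> elements_mat P \<subseteq> S \<and> elements_mat Q \<subseteq> S)"

definition diag_of_list :: "'a::field list \<Rightarrow> 'a mat" where
  "diag_of_list ds = mat (length ds) (length ds) (\<lambda>(i, j). if i = j then ds ! i else 0)"

end

(*
  Write K for the subfield of order q^2 and W for the span of the reduced basis bs, so that the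
  ambient field is W + R with R = rad sigma \<inter> rad sigma*.

  If sigma is diagonal in a basis e, then rad sigma = rad sigma*, and the projections to W of the
  anisotropic e_i form an pairwise_orthogonal basis w of W with sigma(w_i, w_i) = d_i.  Writing w = A bs gives
  A C A* = D = diag(d_i), hence C* C^-1 = A^-1 (D* D^-1) A, and D* D^-1 = diag(d_i^(q-1)).

  Conversely, if C* C^-1 = P D' P^-1 with D' = diag(d_i^(q-1)), the basis v = P^-1 bs of W satisfies
  sigma(y, v_i)^q = d_i^(q-1) sigma(v_i, y) for all y.  Vectors with a common such "eigenvalue" are
  treated like vectors of a Hermitian form, and a Gram-Schmidt induction produces an pairwise_orthogonal basis
  of W with sigma(w_i, w_i) = d_i: an eigenspace contains an anisotropic vector because a nonzero
  polynomial of degree at most q + 1 < q^2 has a non-root in K, and its value can be rescaled to d_i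
  because the norm map K* -> F_q* is onto.  Appending a basis of R gives the diagonal basis.
*)
theory Submission
  imports Defs "HOL-Number_Theory.Residues" "HOL-Combinatorics.Permutations"
    "HOL-Computational_Algebra.Polynomial"
begin

lemma card_le_card_image_mult_fibre_bound:
  assumes "finite A" "\<And>c. c \<in> f ` A \<Longrightarrow> card {x\<in>A. f x = c} \<le> b"
  shows "card A \<le> card (f ` A) * b"
proof -
  have "A = (\<Union>c\<in>f ` A. {x\<in>A. f x = c})" by auto
  hence "card A \<le> (\<Sum>c\<in>f ` A. card {x\<in>A. f x = c})"
    using card_UN_le[of "f ` A" "\<lambda>c. {x\<in>A. f x = c}"] assms(1) by simp
  also have "\<dots> \<le> (\<Sum>c\<in>f ` A. b)" by (intro sum_mono assms(2))
  finally show ?thesis by simp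
qed

lemma card_power_eq_le:
  fixes c :: "'a::field"
  assumes "k > 0"
  shows "card {x. x ^ k = c} \<le> k"
proof -
  define p where "p = monom (1::'a) k + [:-c:]"
  have "degree p = k" using assms by (simp add: p_def degree_add_eq_left degree_monom_eq)
  with assms have "p \<noteq> 0" by auto
  moreover have "{x. poly p x = 0} = {x. x ^ k = c}" by (simp add: p_def poly_monom)
  ultimately show ?thesis using card_poly_roots_bound[of p] \<open>degree p = k\<close> by simp
qed

text \<open>The library's \<open>finite_field_power_card_eq_same\<close> needs the type class \<open>finite_field\<close>, which a
  type variable of sort \<open>{finite, field}\<close> does not carry.\<close>

lemma power_card_UNIV_eq_self:
  fixes x :: "'a::{finite,field}"
  shows "x ^ card (UNIV :: 'a set) = x"
proof (cases "x = 0")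
  case False
  let ?U = "UNIV - {0::'a}"
  have "(\<Prod>y\<in>?U. y) = (\<Prod>y\<in>?U. x * y)"
    by (rule prod.reindex_bij_witness[of _ "\<lambda>y. x * y" "\<lambda>y. y / x"]) (use False in auto)
  also have "\<dots> = x ^ card ?U * (\<Prod>y\<in>?U. y)"
    by (simp only: prod.distrib prod_constant)
  finally have "(\<Prod>y\<in>?U. y) = x ^ card ?U * (\<Prod>y\<in>?U. y)" .
  moreover have "(\<Prod>y\<in>?U. y) \<noteq> 0" by simp
  ultimately have "x ^ card ?U = 1" by (metis mult_cancel_right1)
  moreover have "card ?U = card (UNIV :: 'a set) - 1" by (rule card_Diff_singleton) auto
  hence "card (UNIV :: 'a set) = Suc (card ?U)"
    using finite_UNIV_card_ge_0[OF finite_UNIV[where ?'a = 'a]] by linarith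
  ultimately show ?thesis by (simp only: power_Suc mult_1_right)
qed (use finite_UNIV_card_ge_0[OF finite_UNIV[where ?'a = 'a]] in simp)

lemma prime_CHAR: "prime CHAR('a::{finite,field})"
  by (rule prime_CHAR_semidom) (simp add: finite_imp_CHAR_pos)

abbreviation lincomb :: "(nat \<Rightarrow> 'a::semiring_0) \<Rightarrow> 'a list \<Rightarrow> 'a" where
  "lincomb c vs \<equiv> \<Sum>i<length vs. c i * vs ! i"

lemma lincomb_unit_vector:
  "i < length vs \<Longrightarrow> lincomb (\<lambda>j. if j = i then 1 else 0) vs = (vs ! i :: 'a::semiring_1)"
  by (simp add: if_distrib[of "\<lambda>x. x * _"] cong: if_cong)

lemma mset_map_eq_obtain:
  assumes "mset (map f xs) = mset ys"
  shows "\<exists>zs. mset zs = mset xs \<and> map f zs = ys"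
proof -
  obtain p where p: "p permutes {..<length xs}" "permute_list p (map f xs) = ys"
    using mset_eq_permutation[OF assms[symmetric]] by auto
  thus ?thesis using permute_list_map[OF p(1), of f] by (intro exI[of _ "permute_list p xs"]) simp
qed

section \<open>The subfield of order \<open>q\<^sup>2\<close>\<close>

text \<open>\<open>K\<close> is the subfield \<open>subF q\<close> of order \<open>q\<^sup>2\<close>; it is a parameter only so that the locale
  mentions the ambient type.\<close>

locale field_q2n =
  fixes q n :: nat and K :: "'a::{finite,field} set"
  defines K_def: "K \<equiv> subF q"
  assumes prime_power_q: "prime_power q" and n_pos: "n > 0"
    and card_UNIV: "card (UNIV :: 'a set) = q ^ (2 * n)"
begin

lemma q_power_of_char: "\<exists>k>0. q = CHAR('a) ^ k"
proof -
  obtain p k where pk: "prime p" "k > 0" "q = p ^ k" using prime_power_q by (auto simp: prime_power_def)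
  have "CHAR('a) dvd p ^ (k * (2 * n))"
    using CHAR_dvd_CARD[where ?'a = 'a] card_UNIV pk by (simp add: power_mult)
  hence "CHAR('a) dvd p" by (rule prime_dvd_power[OF prime_CHAR])
  hence "CHAR('a) = p" using pk(1) prime_CHAR[where ?'a = 'a] by (simp add: primes_dvd_imp_eq)
  thus ?thesis using pk by auto
qed

lemma q_ge_2: "q \<ge> 2"
proof -
  obtain k where "k > 0" "q = CHAR('a) ^ k" using q_power_of_char by auto
  moreover have "CHAR('a) \<ge> 2" using prime_CHAR by (rule prime_ge_2_nat)
  moreover from this have "CHAR('a) \<le> CHAR('a) ^ k" using \<open>k > 0\<close> by (intro self_le_power) auto
  ultimately show ?thesis by linarith
qed

lemma frobenius_add: "(x + y :: 'a) ^ q ^ j = x ^ q ^ j + y ^ q ^ j"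
  and frobenius_sum: "(\<Sum>i\<in>A. f i :: 'a) ^ q ^ j = (\<Sum>i\<in>A. f i ^ q ^ j)"
proof -
  obtain k where "q = CHAR('a) ^ k" using q_power_of_char by auto
  hence m: "q ^ j = CHAR('a) ^ (k * j)" by (simp add: power_mult)
  show "(x + y :: 'a) ^ q ^ j = x ^ q ^ j + y ^ q ^ j" by (rule freshmans_dream'[OF prime_CHAR m])
  show "(\<Sum>i\<in>A. f i :: 'a) ^ q ^ j = (\<Sum>i\<in>A. f i ^ q ^ j)"
    by (rule freshmans_dream_sum'[OF prime_CHAR m])
qed

lemma frobenius_minus: "(- x :: 'a) ^ q ^ j = - (x ^ q ^ j)"
proof -
  have "q ^ j > 0" using q_ge_2 by simp
  hence "x ^ q ^ j + (- x) ^ q ^ j = 0" by (simp flip: frobenius_add)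
  thus ?thesis by (simp add: eq_neg_iff_add_eq_0 add.commute)
qed

lemma frobenius_diff: "(x - y :: 'a) ^ q ^ j = x ^ q ^ j - y ^ q ^ j"
  using frobenius_add[of x "- y" j] frobenius_minus[of y j] by simp

lemmas frobenius_add_q = frobenius_add[where j = 1, simplified]
  and frobenius_sum_q = frobenius_sum[where j = 1, simplified]
  and frobenius_minus_q = frobenius_minus[where j = 1, simplified]

lemma power_q_q: "(x ^ q) ^ q = (x :: 'a) ^ q\<^sup>2"
  by (simp add: power_mult[symmetric] power2_eq_square)

lemma mem_K_iff: "x \<in> K \<longleftrightarrow> x ^ q\<^sup>2 = x"
  by (simp add: K_def subF_def)

lemma K_power_q_q: "x \<in> K \<Longrightarrow> (x ^ q) ^ q = x"
  by (simp add: mem_K_iff power_q_q)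

lemma K_0 [simp]: "0 \<in> K" using q_ge_2 by (simp add: mem_K_iff)
lemma K_1 [simp]: "1 \<in> K" by (simp add: mem_K_iff)
lemma K_add [simp]: "x \<in> K \<Longrightarrow> y \<in> K \<Longrightarrow> x + y \<in> K"
  unfolding mem_K_iff frobenius_add by simp
lemma K_uminus [simp]: "x \<in> K \<Longrightarrow> - x \<in> K"
  unfolding mem_K_iff frobenius_minus by simp
lemma K_diff [simp]: "x \<in> K \<Longrightarrow> y \<in> K \<Longrightarrow> x - y \<in> K"
  using K_add K_uminus by (metis diff_conv_add_uminus)
lemma K_mult [simp]: "x \<in> K \<Longrightarrow> y \<in> K \<Longrightarrow> x * y \<in> K"
  by (simp add: mem_K_iff power_mult_distrib)
lemma K_inverse [simp]: "x \<in> K \<Longrightarrow> inverse x \<in> K"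
  by (simp add: mem_K_iff power_inverse)
lemma K_divide [simp]: "x \<in> K \<Longrightarrow> y \<in> K \<Longrightarrow> x / y \<in> K"
  by (simp add: divide_inverse)
lemma K_sum [simp]: "(\<And>i. i \<in> A \<Longrightarrow> f i \<in> K) \<Longrightarrow> (\<Sum>i\<in>A. f i) \<in> K"
  by (induction A rule: infinite_finite_induct) auto

lemma card_K_le: "card K \<le> q\<^sup>2"
proof -
  define p where "p = monom (1::'a) (q\<^sup>2) + [:0, -1:]"
  have "q \<le> q\<^sup>2" by (simp add: power2_eq_square)
  hence "q\<^sup>2 \<ge> 2" using q_ge_2 by linarith
  hence deg: "degree p = q\<^sup>2" by (simp add: p_def degree_add_eq_left degree_monom_eq)
  hence "p \<noteq> 0" using \<open>q\<^sup>2 \<ge> 2\<close> by auto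
  moreover have "{x. poly p x = 0} = K" by (auto simp: p_def poly_monom mem_K_iff)
  ultimately show ?thesis using card_poly_roots_bound[of p] deg by simp
qed

lemma q2_ge_4: "q\<^sup>2 \<ge> 4"
proof -
  have "2 * 2 \<le> q * q" using q_ge_2 mult_le_mono by blast
  thus ?thesis by (simp add: power2_eq_square)
qed

text \<open>The additive map \<open>x \<mapsto> x\<^bsup>q\<^sup>2\<^esup> - x\<close> has kernel \<open>K\<close>, and its image consists of roots of
  \<open>\<Sum>i<n. X\<^bsup>q\<^bsup>2i\<^esup>\<^esup>\<close>, because the sum telescopes to \<open>x\<^bsup>q\<^bsup>2n\<^esup>\<^esup> - x = 0\<close>.\<close>

lemma card_range_frobenius_diff_le: "card (range (\<lambda>x::'a. x ^ q\<^sup>2 - x)) \<le> (q\<^sup>2) ^ (n - 1)"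
proof -
  define a where "a = q\<^sup>2"
  define P where "P = (\<Sum>i<n. monom (1::'a) (a ^ i))"
  have a_pow: "a ^ i = q ^ (2 * i)" for i by (simp add: a_def power_mult)
  have root: "poly P (x ^ a - x) = 0" for x :: 'a
  proof -
    have "poly P (x ^ a - x) = (\<Sum>i<n. (x ^ a - x) ^ (a ^ i))"
      by (simp add: P_def poly_sum poly_monom)
    also have "\<dots> = (\<Sum>i<n. x ^ (a ^ Suc i) - x ^ (a ^ i))"
    proof (intro sum.cong refl)
      fix i
      have "(x ^ a - x) ^ (a ^ i) = (x ^ a) ^ (a ^ i) - x ^ (a ^ i)"
        unfolding a_pow by (rule frobenius_diff)
      thus "(x ^ a - x) ^ (a ^ i) = x ^ (a ^ Suc i) - x ^ (a ^ i)" by (simp flip: power_mult)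
    qed
    also have "\<dots> = x ^ (a ^ n) - x ^ (a ^ 0)" by (rule sum_lessThan_telescope)
    also have "x ^ (a ^ n) = x" using power_card_UNIV_eq_self[of x] card_UNIV by (simp add: a_pow)
    finally show ?thesis by simp
  qed
  have "coeff P (a ^ (n - 1)) = (\<Sum>i<n. if i = n - 1 then 1 else 0)"
    unfolding P_def coeff_sum coeff_monom using q2_ge_4 by (intro sum.cong) (auto simp: a_def)
  hence "P \<noteq> 0" using n_pos by auto
  have "degree P \<le> a ^ (n - 1)"
    unfolding P_def
  proof (rule degree_sum_le)
    fix i assume "i \<in> {..<n}"
    hence "a ^ i \<le> a ^ (n - 1)" using q2_ge_4 by (intro power_increasing) (auto simp: a_def)
    thus "degree (monom (1::'a) (a ^ i)) \<le> a ^ (n - 1)" using degree_monom_le order_trans by blast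
  qed simp
  moreover have "card (range (\<lambda>x::'a. x ^ a - x)) \<le> card {x. poly P x = 0}"
    using root poly_roots_finite[OF \<open>P \<noteq> 0\<close>] by (intro card_mono) auto
  ultimately show ?thesis using card_poly_roots_bound[OF \<open>P \<noteq> 0\<close>] by (simp add: a_def)
qed

lemma card_K: "card K = q\<^sup>2"
proof -
  let ?\<phi> = "\<lambda>x::'a. x ^ q\<^sup>2 - x"
  have "card {x. ?\<phi> x = ?\<phi> x0} \<le> card K" for x0
  proof -
    have "{x. ?\<phi> x = ?\<phi> x0} \<subseteq> (\<lambda>k. x0 + k) ` K"
    proof
      fix x assume "x \<in> {x. ?\<phi> x = ?\<phi> x0}"
      hence "x ^ q\<^sup>2 - x0 ^ q\<^sup>2 = x - x0" by (simp add: algebra_simps)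
      hence "(x - x0) ^ q\<^sup>2 = x - x0" by (simp add: frobenius_diff[where j = 2])
      hence "x - x0 \<in> K" by (simp add: mem_K_iff)
      thus "x \<in> (\<lambda>k. x0 + k) ` K" by (intro image_eqI[of _ _ "x - x0"]) auto
    qed
    hence "card {x. ?\<phi> x = ?\<phi> x0} \<le> card ((\<lambda>k. x0 + k) ` K)" by (intro card_mono) auto
    also have "\<dots> \<le> card K" by (rule card_image_le) simp
    finally show ?thesis .
  qed
  hence "card (UNIV :: 'a set) \<le> card (range ?\<phi>) * card K"
    by (intro card_le_card_image_mult_fibre_bound) auto
  also have "\<dots> \<le> (q\<^sup>2) ^ (n - 1) * card K"
    using card_range_frobenius_diff_le by simp
  also have "card (UNIV :: 'a set) = q\<^sup>2 * (q\<^sup>2) ^ (n - 1)"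
    using card_UNIV n_pos by (simp add: power_mult flip: power_Suc)
  finally have "q\<^sup>2 \<le> card K" using q_ge_2 by (simp add: mult.commute)
  thus ?thesis using card_K_le by simp
qed

text \<open>Counting: the norm \<open>\<mu> \<mapsto> \<mu>\<^bsup>q+1\<^esup>\<close> maps the \<open>q\<^sup>2 - 1\<close> units of \<open>K\<close> into the at most \<open>q - 1\<close>
  nonzero fixed points of \<open>x \<mapsto> x\<^sup>q\<close>, with fibres of size at most \<open>q + 1\<close>.\<close>

lemma K_norm_surj:
  assumes "l \<in> K" "l \<noteq> 0" "l ^ q = l"
  shows "\<exists>\<mu>\<in>K. \<mu> ^ (q + 1) = l"
proof -
  define A where "A = K - {0}"
  define F where "F = {x::'a. x \<noteq> 0 \<and> x ^ q = x}"
  define N where "N = (\<lambda>\<mu>::'a. \<mu> ^ (q + 1))"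
  have "N ` A \<subseteq> F"
  proof
    fix y assume "y \<in> N ` A"
    then obtain \<mu> where \<mu>: "\<mu> \<in> K" "\<mu> \<noteq> 0" "y = \<mu> ^ (q + 1)" by (auto simp: A_def N_def)
    have "(\<mu> ^ (q + 1)) ^ q = (\<mu> ^ q) ^ q * \<mu> ^ q" by (simp add: power_mult_distrib)
    also have "\<dots> = \<mu> ^ (q + 1)" using K_power_q_q[OF \<mu>(1)] by (simp add: mult.commute)
    finally show "y \<in> F" using \<mu> by (simp add: F_def)
  qed
  have "card F \<le> q - 1"
  proof -
    have "F \<subseteq> {x. x ^ (q - 1) = 1}"
    proof
      fix x assume "x \<in> F"
      hence "x \<noteq> 0" "x * x ^ (q - 1) = x * 1" using q_ge_2
        by (auto simp: F_def power_Suc[symmetric] simp del: power_Suc)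
      thus "x \<in> {x. x ^ (q - 1) = 1}" by simp
    qed
    hence "card F \<le> card {x::'a. x ^ (q - 1) = 1}" by (intro card_mono) auto
    also have "\<dots> \<le> q - 1" by (rule card_power_eq_le) (use q_ge_2 in simp)
    finally show ?thesis .
  qed
  have "card A \<le> card (N ` A) * (q + 1)"
  proof (rule card_le_card_image_mult_fibre_bound)
    fix c
    have "card {x\<in>A. N x = c} \<le> card {x::'a. x ^ (q + 1) = c}" by (intro card_mono) (auto simp: N_def)
    also have "\<dots> \<le> q + 1" by (rule card_power_eq_le) simp
    finally show "card {x\<in>A. N x = c} \<le> q + 1" .
  qed (simp add: A_def)
  moreover have "card A = (q - 1) * (q + 1)"
    using card_K q_ge_2 by (simp add: A_def power2_eq_square algebra_simps)
  ultimately have "(q - 1) * (q + 1) \<le> card (N ` A) * (q + 1)" by simp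
  hence "q - 1 \<le> card (N ` A)" by (simp only: mult_le_cancel2)
  hence "N ` A = F"
    using \<open>N ` A \<subseteq> F\<close> \<open>card F \<le> q - 1\<close> card_mono[of F "N ` A"] by (intro card_subset_eq) auto
  moreover have "l \<in> F" using assms by (simp add: F_def)
  ultimately show ?thesis by (auto simp: A_def N_def)
qed

lemma exists_K_nonroot:
  assumes "x \<noteq> 0"
  shows "\<exists>c\<in>K. a + z * c + x * c ^ q + y * c ^ (q + 1) \<noteq> 0"
proof (rule ccontr)
  define p where "p = [:a, z:] + monom x q + monom y (q + 1)"
  have "coeff p q = x" using q_ge_2 by (simp add: p_def coeff_pCons split: nat.split)
  hence "p \<noteq> 0" using assms by auto
  have "degree p \<le> q + 1" unfolding p_def
    by (intro degree_add_le order.trans[OF degree_monom_le]) (use q_ge_2 in auto)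
  assume "\<not> ?thesis"
  hence "K \<subseteq> {c. poly p c = 0}" by (auto simp: p_def poly_monom algebra_simps)
  hence "card K \<le> card {c. poly p c = 0}" by (intro card_mono) (auto simp: poly_roots_finite[OF \<open>p \<noteq> 0\<close>])
  also have "\<dots> \<le> q + 1" using card_poly_roots_bound[OF \<open>p \<noteq> 0\<close>] \<open>degree p \<le> q + 1\<close> by simp
  finally have "q * q \<le> q + 1" using card_K by (simp add: power2_eq_square)
  moreover have "q * 2 \<le> q * q" using q_ge_2 by (intro mult_le_mono2) auto
  ultimately show False using q_ge_2 by linarith
qed

section \<open>Linear algebra over the subfield\<close>

abbreviation span_K :: "'a list \<Rightarrow> 'a set" where "span_K \<equiv> K_span q"
abbreviation indep_K :: "'a list \<Rightarrow> bool" where "indep_K \<equiv> K_indep q"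
abbreviation basis_K :: "'a set \<Rightarrow> 'a list \<Rightarrow> bool" where "basis_K \<equiv> K_basis_of q"

lemma K_span_eq: "span_K vs = {lincomb c vs | c. \<forall>i<length vs. c i \<in> K}"
  by (simp add: K_span_def K_def)

lemma K_indep_iff:
  "indep_K vs \<longleftrightarrow> (\<forall>c. (\<forall>i<length vs. c i \<in> K) \<and> lincomb c vs = 0 \<longrightarrow> (\<forall>i<length vs. c i = 0))"
  by (simp add: K_indep_def K_def)

lemma K_indepD:
  "indep_K vs \<Longrightarrow> (\<And>i. i < length vs \<Longrightarrow> c i \<in> K) \<Longrightarrow> lincomb c vs = 0 \<Longrightarrow> i < length vs \<Longrightarrow> c i = 0"
  by (auto simp: K_indep_iff)

lemma lincomb_mem_K_span: "(\<And>i. i < length vs \<Longrightarrow> c i \<in> K) \<Longrightarrow> lincomb c vs \<in> span_K vs"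
  by (auto simp: K_span_eq)

lemma nth_mem_K_span: "i < length vs \<Longrightarrow> vs ! i \<in> span_K vs"
  using lincomb_mem_K_span[of vs "\<lambda>j. if j = i then 1 else 0"] by (simp add: lincomb_unit_vector)

lemma K_indep_coeffs_unique:
  assumes "indep_K vs" "\<And>i. i < length vs \<Longrightarrow> a i \<in> K" "\<And>i. i < length vs \<Longrightarrow> b i \<in> K"
    "lincomb a vs = lincomb b vs" "i < length vs"
  shows "a i = b i"
proof -
  have "lincomb (\<lambda>i. a i - b i) vs = 0"
    using assms(4) by (simp add: left_diff_distrib sum_subtractf)
  hence "a i - b i = 0" using assms by (intro K_indepD[where c = "\<lambda>i. a i - b i", OF assms(1)]) auto
  thus ?thesis by simp
qed

lemma K_indep_nth_nonzero:
  assumes "indep_K vs" "i < length vs" shows "vs ! i \<noteq> 0"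
proof
  assume "vs ! i = 0"
  hence "lincomb (\<lambda>j. if j = i then 1 else 0) vs = 0" using assms(2) by (simp add: lincomb_unit_vector)
  have "(\<lambda>j. if j = i then 1 else 0) i = (0::'a)"
    using assms \<open>lincomb _ vs = 0\<close> by (intro K_indepD[where c = "\<lambda>j. if j = i then 1 else 0"]) auto
  thus False by simp
qed

lemma K_indep_distinct:
  assumes "indep_K vs" shows "distinct vs"
proof (rule ccontr)
  assume "\<not> distinct vs"
  then obtain i j where ij: "i < length vs" "j < length vs" "i \<noteq> j" "vs ! i = vs ! j"
    using distinct_conv_nth by blast
  have "lincomb (\<lambda>k. if k = i then 1 else 0) vs = lincomb (\<lambda>k. if k = j then 1 else 0) vs"
    using ij by (simp add: lincomb_unit_vector)
  hence "(if i = i then 1 else 0) = (if i = j then (1::'a) else 0)"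
    using ij(1) by (intro K_indep_coeffs_unique[where a = "\<lambda>k. if k = i then 1 else 0", OF assms]) auto
  thus False using ij(3) by simp
qed

definition K_subspace :: "'a set \<Rightarrow> bool" where
  "K_subspace S \<longleftrightarrow> 0 \<in> S \<and> (\<forall>x\<in>S. \<forall>y\<in>S. x + y \<in> S) \<and> (\<forall>a\<in>K. \<forall>x\<in>S. a * x \<in> S)"

lemma K_subspace_0: "K_subspace S \<Longrightarrow> 0 \<in> S"
  and K_subspace_add: "K_subspace S \<Longrightarrow> x \<in> S \<Longrightarrow> y \<in> S \<Longrightarrow> x + y \<in> S"
  and K_subspace_scale: "K_subspace S \<Longrightarrow> a \<in> K \<Longrightarrow> x \<in> S \<Longrightarrow> a * x \<in> S"
  by (auto simp: K_subspace_def)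

lemma K_subspace_diff:
  assumes "K_subspace S" "x \<in> S" "y \<in> S" shows "x - y \<in> S"
  using K_subspace_add[OF assms(1,2) K_subspace_scale[OF assms(1) _ assms(3), of "-1"]] by simp

lemma K_subspace_sum:
  assumes "K_subspace S" "\<And>i. i \<in> A \<Longrightarrow> c i \<in> K" "\<And>i. i \<in> A \<Longrightarrow> v i \<in> S"
  shows "(\<Sum>i\<in>A. c i * v i) \<in> S"
  using assms(2,3)
proof (induction A rule: infinite_finite_induct)
  case (insert i A)
  thus ?case by (simp add: K_subspace_add[OF assms(1)] K_subspace_scale[OF assms(1)])
qed (simp_all add: K_subspace_0[OF assms(1)])

lemma K_subspace_K_span: "K_subspace (span_K vs)"
  unfolding K_subspace_def K_span_eq
proof (intro conjI ballI)
  show "0 \<in> {lincomb c vs | c. \<forall>i<length vs. c i \<in> K}"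
    by (intro CollectI exI[of _ "\<lambda>_. 0"]) simp
next
  fix x y assume "x \<in> {lincomb c vs | c. \<forall>i<length vs. c i \<in> K}" "y \<in> {lincomb c vs | c. \<forall>i<length vs. c i \<in> K}"
  then obtain c d where "x = lincomb c vs" "\<forall>i<length vs. c i \<in> K" "y = lincomb d vs" "\<forall>i<length vs. d i \<in> K"
    by auto
  thus "x + y \<in> {lincomb c vs | c. \<forall>i<length vs. c i \<in> K}"
    by (intro CollectI exI[of _ "\<lambda>i. c i + d i"]) (auto simp: sum.distrib algebra_simps)
next
  fix a x assume "a \<in> K" "x \<in> {lincomb c vs | c. \<forall>i<length vs. c i \<in> K}"
  then obtain c where "x = lincomb c vs" "\<forall>i<length vs. c i \<in> K" by auto
  thus "a * x \<in> {lincomb c vs | c. \<forall>i<length vs. c i \<in> K}"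
    using \<open>a \<in> K\<close> by (intro CollectI exI[of _ "\<lambda>i. a * c i"]) (auto simp: sum_distrib_left algebra_simps)
qed

lemma K_span_subset: "K_subspace S \<Longrightarrow> set vs \<subseteq> S \<Longrightarrow> span_K vs \<subseteq> S"
  unfolding K_span_eq by (auto intro!: K_subspace_sum)

lemma set_subset_K_span: "set vs \<subseteq> span_K vs"
  by (auto simp: in_set_conv_nth nth_mem_K_span)

lemma K_span_append: "span_K ws \<subseteq> span_K (ws @ rs)" "span_K rs \<subseteq> span_K (ws @ rs)"
  using set_subset_K_span[of "ws @ rs"] by (simp_all add: K_span_subset[OF K_subspace_K_span])

lemma K_span_eq_if_mutual:
  "set xs \<subseteq> span_K ys \<Longrightarrow> set ys \<subseteq> span_K xs \<Longrightarrow> span_K xs = span_K ys"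
  by (auto dest: K_span_subset[OF K_subspace_K_span])

lemma K_span_Cons_subtract:
  assumes "\<And>v. a v \<in> K"
  shows "span_K (w # map (\<lambda>v. v - a v * w) vs) = span_K (w # vs)"
proof (rule K_span_eq_if_mutual)
  have "w \<in> span_K (w # vs)" "set vs \<subseteq> span_K (w # vs)"
    using set_subset_K_span[of "w # vs"] by auto
  thus "set (w # map (\<lambda>v. v - a v * w) vs) \<subseteq> span_K (w # vs)"
    using assms by (auto intro!: K_subspace_diff K_subspace_scale K_subspace_K_span)
  have "w \<in> span_K (w # map (\<lambda>v. v - a v * w) vs)" "v - a v * w \<in> span_K (w # map (\<lambda>v. v - a v * w) vs)"
    if "v \<in> set vs" for v
    using set_subset_K_span[of "w # map (\<lambda>v. v - a v * w) vs"] that by auto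
  hence "(v - a v * w) + a v * w \<in> span_K (w # map (\<lambda>v. v - a v * w) vs)" if "v \<in> set vs" for v
    using assms that by (intro K_subspace_add K_subspace_scale K_subspace_K_span) auto
  thus "set (w # vs) \<subseteq> span_K (w # map (\<lambda>v. v - a v * w) vs)"
    using set_subset_K_span[of "w # map (\<lambda>v. v - a v * w) vs"] by auto
qed

lemma K_span_Cons_replace:
  assumes "\<mu> \<in> K" "\<mu> \<noteq> 0" "x \<in> span_K vs"
  shows "span_K (\<mu> * (v + x) # vs) = span_K (v # vs)"
proof (rule K_span_eq_if_mutual)
  have sub: "span_K vs \<subseteq> span_K (y # vs)" for y
    using K_span_append(2)[of vs "[y]"] by simp
  have "v \<in> span_K (v # vs)" using set_subset_K_span[of "v # vs"] by simp
  hence "\<mu> * (v + x) \<in> span_K (v # vs)"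
    using assms sub by (intro K_subspace_scale K_subspace_add K_subspace_K_span) auto
  thus "set (\<mu> * (v + x) # vs) \<subseteq> span_K (v # vs)" using set_subset_K_span[of "v # vs"] by auto
  have "\<mu> * (v + x) \<in> span_K (\<mu> * (v + x) # vs)" using set_subset_K_span[of "\<mu> * (v + x) # vs"] by simp
  hence "inverse \<mu> * (\<mu> * (v + x)) \<in> span_K (\<mu> * (v + x) # vs)"
    using assms(1) by (rule_tac K_subspace_scale[OF K_subspace_K_span]) simp_all
  moreover have "inverse \<mu> * (\<mu> * (v + x)) = v + x" using assms(2) by simp
  ultimately have "(v + x) - x \<in> span_K (\<mu> * (v + x) # vs)"
    using assms(3) sub by (intro K_subspace_diff[OF K_subspace_K_span]) auto
  then show "set (v # vs) \<subseteq> span_K (\<mu> * (v + x) # vs)"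
    using set_subset_K_span[of "\<mu> * (v + x) # vs"] by auto
qed

definition coeff_vectors :: "nat \<Rightarrow> (nat \<Rightarrow> 'a) set" where
  "coeff_vectors m = PiE {..<m} (\<lambda>_. K)"

lemma finite_coeff_vectors: "finite (coeff_vectors m)"
  by (simp add: coeff_vectors_def finite_PiE K_def)

lemma card_coeff_vectors: "card (coeff_vectors m) = card K ^ m"
  by (simp add: coeff_vectors_def card_PiE)

lemma K_span_eq_image: "span_K vs = (\<lambda>c. lincomb c vs) ` coeff_vectors (length vs)"
proof
  show "span_K vs \<subseteq> (\<lambda>c. lincomb c vs) ` coeff_vectors (length vs)"
  proof
    fix x assume "x \<in> span_K vs"
    then obtain c where c: "x = lincomb c vs" "\<forall>i<length vs. c i \<in> K" by (auto simp: K_span_eq)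
    hence "restrict c {..<length vs} \<in> coeff_vectors (length vs)" "x = lincomb (restrict c {..<length vs}) vs"
      by (auto simp: coeff_vectors_def)
    thus "x \<in> (\<lambda>c. lincomb c vs) ` coeff_vectors (length vs)" by blast
  qed
  show "(\<lambda>c. lincomb c vs) ` coeff_vectors (length vs) \<subseteq> span_K vs"
    by (auto simp: coeff_vectors_def intro!: lincomb_mem_K_span)
qed

lemma K_indep_iff_inj_on: "indep_K vs \<longleftrightarrow> inj_on (\<lambda>c. lincomb c vs) (coeff_vectors (length vs))"
proof
  assume "indep_K vs"
  show "inj_on (\<lambda>c. lincomb c vs) (coeff_vectors (length vs))"
  proof (rule inj_onI)
    fix c d assume cd: "c \<in> coeff_vectors (length vs)" "d \<in> coeff_vectors (length vs)"
      and eq: "lincomb c vs = lincomb d vs"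
    hence "c i \<in> K" "d i \<in> K" if "i < length vs" for i using that by (auto simp: coeff_vectors_def PiE_iff)
    hence "c i = d i" if "i < length vs" for i using K_indep_coeffs_unique[OF \<open>indep_K vs\<close> _ _ eq that] by blast
    thus "c = d" using cd unfolding coeff_vectors_def by (intro PiE_ext) auto
  qed
next
  assume inj: "inj_on (\<lambda>c. lincomb c vs) (coeff_vectors (length vs))"
  show "indep_K vs" unfolding K_indep_iff
  proof (intro allI impI)
    fix c i assume c: "(\<forall>i<length vs. c i \<in> K) \<and> lincomb c vs = 0" and i: "i < length vs"
    let ?c = "restrict c {..<length vs}" and ?z = "restrict (\<lambda>_. 0) {..<length vs}"
    have "?c \<in> coeff_vectors (length vs)" "?z \<in> coeff_vectors (length vs)"
      using c by (auto simp: coeff_vectors_def)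
    moreover have "lincomb ?c vs = lincomb ?z vs" using c by simp
    ultimately have "?c = ?z" by (intro inj_onD[OF inj])
    hence "?c i = ?z i" by (rule fun_cong)
    thus "c i = 0" using i by simp
  qed
qed

lemma card_K_ge_4: "card K \<ge> 4"
  using card_K q2_ge_4 by simp

lemma card_K_span: "indep_K vs \<Longrightarrow> card (span_K vs) = card K ^ length vs"
  by (simp add: K_span_eq_image K_indep_iff_inj_on card_image card_coeff_vectors)

lemma K_indep_of_card_K_span:
  assumes "card (span_K vs) = card K ^ length vs" shows "indep_K vs"
proof -
  have "card ((\<lambda>c. lincomb c vs) ` coeff_vectors (length vs)) = card (coeff_vectors (length vs))"
    using assms by (simp add: K_span_eq_image card_coeff_vectors)
  thus ?thesis by (simp add: K_indep_iff_inj_on eq_card_imp_inj_on[OF finite_coeff_vectors])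
qed

lemma K_span_eq_of_K_indep:
  assumes "basis_K U vs" "set ws \<subseteq> U" "length ws = length vs" "indep_K ws"
  shows "span_K ws = U"
proof -
  have U: "U = span_K vs" "indep_K vs" using assms(1) by (auto simp: K_basis_of_def)
  have "span_K ws \<subseteq> U" using U(1) assms(2) K_span_subset[OF K_subspace_K_span] by blast
  moreover have "card (span_K ws) = card U"
    using card_K_span[OF assms(4)] card_K_span[OF U(2)] U(1) assms(3) by simp
  ultimately show ?thesis using U(1) by (intro card_subset_eq) auto
qed

lemma K_indep_of_K_span_eq:
  assumes "basis_K U vs" "length ws = length vs" "span_K ws = U"
  shows "indep_K ws"
  using assms card_K_span[of vs] by (intro K_indep_of_card_K_span) (auto simp: K_basis_of_def)

lemma K_basis_length_eq:
  assumes "basis_K U vs" "basis_K U ws" shows "length vs = length ws"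
proof -
  have "card K ^ length vs = card K ^ length ws"
    using assms card_K_span[of vs] card_K_span[of ws] by (auto simp: K_basis_of_def)
  thus ?thesis using card_K_ge_4 by simp
qed

lemma K_indep_ConsD: "indep_K (v # vs) \<Longrightarrow> indep_K vs"
  unfolding K_indep_iff
proof (intro allI impI)
  fix c i assume ind: "\<forall>c. (\<forall>i<length (v # vs). c i \<in> K) \<and> lincomb c (v # vs) = 0 \<longrightarrow> (\<forall>i<length (v # vs). c i = 0)"
    and c: "(\<forall>i<length vs. c i \<in> K) \<and> lincomb c vs = 0" and i: "i < length vs"
  define c' where "c' j = (if j = 0 then 0 else c (j - 1))" for j
  have "lincomb c' (v # vs) = lincomb c vs"
    by (simp add: sum.lessThan_Suc_shift c'_def del: sum.lessThan_Suc)
  moreover have "\<forall>j<length (v # vs). c' j \<in> K" using c by (auto simp: c'_def nth_Cons')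
  ultimately have "c' (Suc i) = 0" using ind c i by auto
  thus "c i = 0" by (simp add: c'_def)
qed

lemma K_indep_snoc:
  assumes ind: "indep_K vs" and s: "s \<notin> span_K vs"
  shows "indep_K (vs @ [s])"
  unfolding K_indep_iff
proof (intro allI impI)
  fix c i assume c: "(\<forall>i<length (vs @ [s]). c i \<in> K) \<and> lincomb c (vs @ [s]) = 0"
    and i: "i < length (vs @ [s])"
  let ?m = "length vs"
  have "(\<Sum>i<?m. c i * (vs @ [s]) ! i) = lincomb c vs"
    by (intro sum.cong) (auto simp: nth_append)
  hence sum0: "lincomb c vs + c ?m * s = 0" using c by simp
  have cm: "c ?m = 0"
  proof (rule ccontr)
    assume "c ?m \<noteq> 0"
    hence "s = lincomb (\<lambda>i. - c i / c ?m) vs" using sum0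
      by (simp add: sum_divide_distrib[symmetric] field_simps sum_negf eq_neg_iff_add_eq_0)
    moreover have "lincomb (\<lambda>i. - c i / c ?m) vs \<in> span_K vs"
      using c by (intro lincomb_mem_K_span) auto
    ultimately show False using s by simp
  qed
  show "c i = 0"
  proof (cases "i = ?m")
    case False
    hence "i < ?m" using i by simp
    moreover have "lincomb c vs = 0" "\<forall>j<?m. c j \<in> K" using sum0 cm c by auto
    ultimately show ?thesis using ind unfolding K_indep_iff by blast
  qed (use cm in simp)
qed

lemma exists_K_basis:
  assumes "K_subspace S"
  shows "\<exists>vs. basis_K S vs"
proof -
  define P where "P m \<longleftrightarrow> (\<exists>vs. length vs = m \<and> indep_K vs \<and> set vs \<subseteq> S)" for m
  have "P 0" by (auto simp: P_def K_indep_iff)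
  have bound: "m \<le> card (UNIV :: 'a set)" if "P m" for m
  proof -
    obtain vs where vs: "length vs = m" "indep_K vs" using \<open>P m\<close> by (auto simp: P_def)
    have "m < 2 ^ m" by (rule less_exp)
    also have "(2::nat) ^ m \<le> card K ^ m" using card_K_ge_4 by (intro power_mono) auto
    also have "\<dots> = card (span_K vs)" using card_K_span[OF vs(2)] vs(1) by simp
    also have "\<dots> \<le> card (UNIV :: 'a set)" by (rule card_mono) auto
    finally show ?thesis by simp
  qed
  obtain m where m: "P m" "\<And>m'. P m' \<Longrightarrow> m' \<le> m"
    using ex_has_greatest_nat[of P 0 id "Suc (card (UNIV :: 'a set))"] \<open>P 0\<close> bound by force
  then obtain vs where vs: "length vs = m" "indep_K vs" "set vs \<subseteq> S" by (auto simp: P_def)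
  have "span_K vs = S"
  proof (rule ccontr)
    assume "span_K vs \<noteq> S"
    moreover have "span_K vs \<subseteq> S" using K_span_subset[OF assms vs(3)] .
    ultimately obtain s where s: "s \<in> S" "s \<notin> span_K vs" by blast
    have "P (Suc m)" unfolding P_def using K_indep_snoc[OF vs(2) s(2)] vs s
      by (intro exI[of _ "vs @ [s]"]) auto
    thus False using m(2) by fastforce
  qed
  thus ?thesis using vs by (auto simp: K_basis_of_def)
qed

lemma card_direct_sum:
  assumes "K_subspace W" "K_subspace R" "W \<inter> R = {0}" "{w + r | w r. w \<in> W \<and> r \<in> R} = UNIV"
  shows "card (UNIV :: 'a set) = card W * card R"
proof -
  have "(\<lambda>(w, r). w + r) ` (W \<times> R) = UNIV"
  proof (intro equalityI subsetI)
    fix x :: 'a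
    obtain w r where "w \<in> W" "r \<in> R" "x = w + r" using assms(4) by blast
    thus "x \<in> (\<lambda>(w, r). w + r) ` (W \<times> R)" by (intro image_eqI[of _ _ "(w, r)"]) auto
  qed simp
  moreover have "inj_on (\<lambda>(w, r). w + r) (W \<times> R)"
  proof (rule inj_onI, clarify)
    fix w r w' r' assume h: "w \<in> W" "r \<in> R" "w' \<in> W" "r' \<in> R" "w + r = w' + r'"
    hence "w - w' = r' - r" by (simp add: algebra_simps)
    moreover have "w - w' \<in> W" "r' - r \<in> R" using h K_subspace_diff assms(1,2) by auto
    ultimately have "r' - r \<in> W \<inter> R" by simp
    hence "r' - r = 0" using assms(3) by blast
    thus "w = w' \<and> r = r'" using \<open>w - w' = r' - r\<close> by simp
  qed
  ultimately show ?thesis by (metis card_image card_cartesian_product)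
qed

end

section \<open>Matrices\<close>

lemma index_mult_mat_sum:
  assumes "A \<in> carrier_mat a k" "B \<in> carrier_mat k b" "i < a" "j < b"
  shows "(A * B) $$ (i, j) = (\<Sum>l<k. A $$ (i, l) * B $$ (l, j))"
  using assms by (simp add: scalar_prod_def atLeast0LessThan)

lemma mult_mat_inverse_cancel:
  fixes P Q Y :: "'a::semiring_1 mat"
  assumes "P \<in> carrier_mat m m" "Q \<in> carrier_mat m m" "P * Q = 1\<^sub>m m" "Y \<in> carrier_mat m k"
  shows "P * (Q * Y) = Y"
  using assms by (simp flip: assoc_mult_mat[of P m m Q m Y k])

lemma diag_of_list_carrier [simp]: "diag_of_list ds \<in> carrier_mat (length ds) (length ds)"
  and dim_row_diag_of_list [simp]: "dim_row (diag_of_list ds) = length ds"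
  and dim_col_diag_of_list [simp]: "dim_col (diag_of_list ds) = length ds"
  by (simp_all add: diag_of_list_def)

lemma index_diag_of_list:
  "i < length ds \<Longrightarrow> j < length ds \<Longrightarrow> diag_of_list ds $$ (i, j) = (if i = j then ds ! i else 0)"
  by (simp add: diag_of_list_def)

lemma index_diag_of_list_mult:
  assumes "X \<in> carrier_mat (length ds) k" "i < length ds" "j < k"
  shows "(diag_of_list ds * X) $$ (i, j) = ds ! i * X $$ (i, j)"
proof -
  have "(diag_of_list ds * X) $$ (i, j) = (\<Sum>l<length ds. diag_of_list ds $$ (i, l) * X $$ (l, j))"
    using assms by (intro index_mult_mat_sum) auto
  also have "\<dots> = (\<Sum>l<length ds. if l = i then ds ! i * X $$ (i, j) else 0)"
    using assms(2) by (intro sum.cong) (auto simp: index_diag_of_list)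
  finally show ?thesis using assms(2) by simp
qed

lemma diag_of_list_mult:
  assumes "length ds = length es"
  shows "diag_of_list ds * diag_of_list es = diag_of_list (map2 (*) ds es)"
proof (rule eq_matI)
  fix i j assume "i < dim_row (diag_of_list (map2 (*) ds es))" "j < dim_col (diag_of_list (map2 (*) ds es))"
  hence ij: "i < length ds" "j < length ds" using assms by auto
  have "(diag_of_list ds * diag_of_list es) $$ (i, j) =
      (\<Sum>l<length ds. diag_of_list ds $$ (i, l) * diag_of_list es $$ (l, j))"
    using assms ij by (intro index_mult_mat_sum) auto
  also have "\<dots> = (\<Sum>l<length ds. if l = i then (if i = j then ds ! i * es ! i else 0) else 0)"
    using assms ij by (intro sum.cong) (auto simp: index_diag_of_list)
  finally show "(diag_of_list ds * diag_of_list es) $$ (i, j) = diag_of_list (map2 (*) ds es) $$ (i, j)"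
    using ij assms by (simp add: index_diag_of_list)
qed (use assms in auto)

lemma diag_of_list_inverse:
  fixes ds :: "'a::field list"
  assumes "0 \<notin> set ds"
  shows "diag_of_list ds * diag_of_list (map inverse ds) = 1\<^sub>m (length ds)"
    and "diag_of_list (map inverse ds) * diag_of_list ds = 1\<^sub>m (length ds)"
  using assms by (auto simp: diag_of_list_mult index_diag_of_list in_set_conv_nth)

lemma elements_mat_subset_iff:
  "elements_mat A \<subseteq> S \<longleftrightarrow> (\<forall>i<dim_row A. \<forall>j<dim_col A. A $$ (i, j) \<in> S)"
  by (blast intro: elements_matI[OF carrier_matI[OF refl refl]])

lemma diag_of_list_power_mult_inverse:
  fixes ds :: "'a::field list"
  assumes "0 \<notin> set ds" "k > 0"
  shows "diag_of_list (map (\<lambda>d. d ^ k) ds) * diag_of_list (map inverse ds) = diag_of_list (map (\<lambda>d. d ^ (k - 1)) ds)"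
proof -
  have "d ^ k * inverse d = d ^ (k - 1)" if "d \<noteq> 0" for d :: 'a
    using that assms(2) by (cases k) (simp_all add: field_simps)
  hence "map2 (*) (map (\<lambda>d. d ^ k) ds) (map inverse ds) = map (\<lambda>d. d ^ (k - 1)) ds"
    using assms(1) by (induction ds) auto
  thus ?thesis by (simp add: diag_of_list_mult)
qed

context field_q2n
begin

lemma star_mat_carrier [simp]: "X \<in> carrier_mat a b \<Longrightarrow> star_mat q X \<in> carrier_mat b a"
  and dim_row_star_mat [simp]: "dim_row (star_mat q X) = dim_col X"
  and dim_col_star_mat [simp]: "dim_col (star_mat q X) = dim_row X"
  by (simp_all add: star_mat_def)

lemma index_star_mat: "i < dim_col X \<Longrightarrow> j < dim_row X \<Longrightarrow> star_mat q X $$ (i, j) = (X $$ (j, i)) ^ q"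
  by (simp add: star_mat_def)

lemma star_mat_mult:
  fixes X Y :: "'a mat"
  assumes "X \<in> carrier_mat a k" "Y \<in> carrier_mat k b"
  shows "star_mat q (X * Y) = star_mat q Y * star_mat q X"
proof (rule eq_matI)
  fix i j assume "i < dim_row (star_mat q Y * star_mat q X)" "j < dim_col (star_mat q Y * star_mat q X)"
  hence ij: "i < b" "j < a" using assms by auto
  have "star_mat q (X * Y) $$ (i, j) = ((X * Y) $$ (j, i)) ^ q"
    using assms ij by (simp add: index_star_mat)
  also have "\<dots> = (\<Sum>l<k. X $$ (j, l) * Y $$ (l, i)) ^ q"
    using assms ij by (subst index_mult_mat_sum[of _ a k _ b]) auto
  also have "\<dots> = (\<Sum>l<k. (Y $$ (l, i)) ^ q * (X $$ (j, l)) ^ q)"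
    unfolding frobenius_sum_q by (simp add: power_mult_distrib mult.commute)
  also have "\<dots> = (star_mat q Y * star_mat q X) $$ (i, j)"
    using assms ij by (subst index_mult_mat_sum[of _ b k _ a]) (auto simp: index_star_mat)
  finally show "star_mat q (X * Y) $$ (i, j) = (star_mat q Y * star_mat q X) $$ (i, j)" .
qed (use assms in auto)

lemma star_mat_star_mat:
  assumes "elements_mat X \<subseteq> K"
  shows "star_mat q (star_mat q X) = X"
proof (rule eq_matI)
  fix i j assume "i < dim_row X" "j < dim_col X"
  hence "X $$ (i, j) \<in> K" using assms by auto
  thus "star_mat q (star_mat q X) $$ (i, j) = X $$ (i, j)"
    using \<open>i < dim_row X\<close> \<open>j < dim_col X\<close> by (simp add: index_star_mat K_power_q_q)
qed simp_all

lemma star_mat_one [simp]: "star_mat q (1\<^sub>m m) = (1\<^sub>m m :: 'a mat)"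
  by (rule eq_matI) (use q_ge_2 in \<open>auto simp: index_star_mat\<close>)

lemma star_mat_diag_of_list: "star_mat q (diag_of_list ds) = diag_of_list (map (\<lambda>d. d ^ q) ds :: 'a list)"
  by (rule eq_matI) (use q_ge_2 in \<open>auto simp: index_star_mat index_diag_of_list\<close>)

lemma elements_mat_mult_subset_K:
  assumes "A \<in> carrier_mat a k" "B \<in> carrier_mat k b" "elements_mat A \<subseteq> K" "elements_mat B \<subseteq> K"
  shows "elements_mat (A * B) \<subseteq> K"
  unfolding elements_mat_subset_iff
proof (intro allI impI)
  fix i j assume "i < dim_row (A * B)" "j < dim_col (A * B)"
  hence "i < a" "j < b" using assms(1,2) by auto
  hence "(A * B) $$ (i, j) = (\<Sum>l<k. A $$ (i, l) * B $$ (l, j))" by (intro index_mult_mat_sum[OF assms(1,2)])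
  thus "(A * B) $$ (i, j) \<in> K"
    using assms \<open>i < a\<close> \<open>j < b\<close> by (auto simp: elements_mat_subset_iff intro!: K_sum K_mult)
qed

lemma lincomb_mult_mat:
  assumes "A \<in> carrier_mat a (length vs)" "B \<in> carrier_mat (length vs) (length zs)" "i < a"
    and "\<And>j. j < length vs \<Longrightarrow> vs ! j = lincomb (\<lambda>l. B $$ (j, l)) zs"
  shows "lincomb (\<lambda>j. A $$ (i, j)) vs = lincomb (\<lambda>l. (A * B) $$ (i, l)) zs"
proof -
  have "lincomb (\<lambda>j. A $$ (i, j)) vs = (\<Sum>j<length vs. \<Sum>l<length zs. A $$ (i, j) * B $$ (j, l) * zs ! l)"
    using assms(4) by (simp add: sum_distrib_left mult.assoc)
  also have "\<dots> = (\<Sum>l<length zs. \<Sum>j<length vs. A $$ (i, j) * B $$ (j, l) * zs ! l)"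
    by (rule sum.swap)
  also have "\<dots> = lincomb (\<lambda>l. (A * B) $$ (i, l)) zs"
  proof (rule sum.cong[OF refl])
    fix l assume "l \<in> {..<length zs}"
    hence "(A * B) $$ (i, l) = (\<Sum>j<length vs. A $$ (i, j) * B $$ (j, l))"
      using assms(1-3) by (intro index_mult_mat_sum) auto
    thus "(\<Sum>j<length vs. A $$ (i, j) * B $$ (j, l) * zs ! l) = (A * B) $$ (i, l) * zs ! l"
      by (simp add: sum_distrib_right)
  qed
  finally show ?thesis .
qed

lemma exists_coord_mat:
  assumes "basis_K W bs" "set ws \<subseteq> W"
  shows "\<exists>A. A \<in> carrier_mat (length ws) (length bs) \<and> elements_mat A \<subseteq> K \<and>
    (\<forall>i<length ws. ws ! i = lincomb (\<lambda>j. A $$ (i, j)) bs)"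
proof -
  have "ws ! i \<in> span_K bs" if "i < length ws" for i
    using assms that nth_mem by (auto simp: K_basis_of_def)
  hence "\<forall>i<length ws. \<exists>c. (\<forall>j<length bs. c j \<in> K) \<and> ws ! i = lincomb c bs"
    by (auto simp: K_span_eq)
  then obtain f where f: "\<And>i j. i < length ws \<Longrightarrow> j < length bs \<Longrightarrow> f i j \<in> K"
    "\<And>i. i < length ws \<Longrightarrow> ws ! i = lincomb (f i) bs"
    by metis
  define A where "A = mat (length ws) (length bs) (\<lambda>(i, j). f i j)"
  have "ws ! i = lincomb (\<lambda>j. A $$ (i, j)) bs" if "i < length ws" for i
    unfolding f(2)[OF that] using that by (intro sum.cong) (auto simp: A_def)
  moreover have "elements_mat A \<subseteq> K" using f(1) by (auto simp: A_def elements_mat_subset_iff)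
  moreover have "A \<in> carrier_mat (length ws) (length bs)" by (simp add: A_def)
  ultimately show ?thesis by blast
qed

lemma coord_mats_inverse:
  assumes "A \<in> carrier_mat m m" "B \<in> carrier_mat m m" "elements_mat A \<subseteq> K" "elements_mat B \<subseteq> K"
    and "indep_K ws" "length ws = m" "length vs = m"
    and "\<And>i. i < m \<Longrightarrow> ws ! i = lincomb (\<lambda>j. A $$ (i, j)) vs"
    and "\<And>j. j < m \<Longrightarrow> vs ! j = lincomb (\<lambda>l. B $$ (j, l)) ws"
  shows "A * B = 1\<^sub>m m"
proof (rule eq_matI)
  fix i l assume "i < dim_row (1\<^sub>m m :: 'a mat)" "l < dim_col (1\<^sub>m m :: 'a mat)"
  hence il: "i < m" "l < m" by auto
  have AB_K: "(A * B) $$ (i, j) \<in> K" if "j < m" for j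
    using elements_mat_mult_subset_K[OF assms(1-4)] assms(1,2) il(1) that by (auto simp: elements_mat_subset_iff)
  have "lincomb (\<lambda>j. 1\<^sub>m m $$ (i, j)) ws = lincomb (\<lambda>j. if j = i then 1 else 0) ws"
    using il assms(6) by (intro sum.cong) auto
  also have "\<dots> = ws ! i"
    using lincomb_unit_vector[of i ws] il assms(6) by simp
  also have "\<dots> = lincomb (\<lambda>j. A $$ (i, j)) vs" by (rule assms(8)[OF il(1)])
  also have "\<dots> = lincomb (\<lambda>j. (A * B) $$ (i, j)) ws"
  proof (rule lincomb_mult_mat)
    show "A \<in> carrier_mat m (length vs)" "B \<in> carrier_mat (length vs) (length ws)"
      using assms(1,2,6,7) by simp_all
    show "vs ! j = lincomb (\<lambda>l. B $$ (j, l)) ws" if "j < length vs" for j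
      using that assms(7) by (rule_tac assms(9)) simp
  qed (rule il(1))
  finally have eq: "lincomb (\<lambda>j. (A * B) $$ (i, j)) ws = lincomb (\<lambda>j. 1\<^sub>m m $$ (i, j)) ws" ..
  show "(A * B) $$ (i, l) = 1\<^sub>m m $$ (i, l)"
    by (rule K_indep_coeffs_unique[OF assms(5) _ _ eq]) (use il assms(6) AB_K in auto)
qed (use assms(1,2) in auto)

lemma K_basis_transform:
  assumes "basis_K U bs" "P \<in> carrier_mat (length bs) (length bs)" "Q \<in> carrier_mat (length bs) (length bs)"
    "elements_mat P \<subseteq> K" "elements_mat Q \<subseteq> K" "P * Q = 1\<^sub>m (length bs)"
  shows "basis_K U (map (\<lambda>i. lincomb (\<lambda>k. Q $$ (i, k)) bs) [0..<length bs])"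
    (is "basis_K U ?vs")
proof -
  have U: "U = span_K bs" using assms(1) by (simp add: K_basis_of_def)
  have "set ?vs \<subseteq> U"
    using assms(3,5) by (auto simp: U elements_mat_subset_iff intro!: lincomb_mem_K_span)
  moreover have "bs ! i \<in> span_K ?vs" if i: "i < length bs" for i
  proof -
    have "lincomb (\<lambda>j. P $$ (i, j)) ?vs = lincomb (\<lambda>l. (P * Q) $$ (i, l)) bs"
      using assms(2,3) i by (intro lincomb_mult_mat) auto
    also have "\<dots> = lincomb (\<lambda>l. if l = i then 1 else 0) bs"
      using assms(6) i by (intro sum.cong) auto
    finally have "bs ! i = lincomb (\<lambda>j. P $$ (i, j)) ?vs" using i by (simp add: lincomb_unit_vector)
    moreover have "lincomb (\<lambda>j. P $$ (i, j)) ?vs \<in> span_K ?vs"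
      by (rule lincomb_mem_K_span) (use assms(2,4) i in \<open>auto simp: elements_mat_subset_iff\<close>)
    ultimately show ?thesis by simp
  qed
  ultimately have "span_K ?vs = U"
    unfolding U by (intro K_span_eq_if_mutual) (auto simp: U in_set_conv_nth)
  moreover from this have "indep_K ?vs" using assms(1) by (intro K_indep_of_K_span_eq) auto
  ultimately show ?thesis by (simp add: K_basis_of_def)
qed

lemma star_mat_inverse:
  fixes A B :: "'a mat"
  assumes "A \<in> carrier_mat m m" "B \<in> carrier_mat m m" "B * A = 1\<^sub>m m"
  shows "star_mat q A * star_mat q B = 1\<^sub>m m"
  using star_mat_mult[OF assms(2,1)] assms(3) by simp

lemma star_conj_inverse_of_congruent:
  fixes A B C D Di :: "'a mat"
  assumes carr: "A \<in> carrier_mat m m" "B \<in> carrier_mat m m" "C \<in> carrier_mat m m"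
      "D \<in> carrier_mat m m" "Di \<in> carrier_mat m m"
    and inv: "A * B = 1\<^sub>m m" "B * A = 1\<^sub>m m" "D * Di = 1\<^sub>m m" "Di * D = 1\<^sub>m m"
    and "elements_mat B \<subseteq> K" and congr: "A * C * star_mat q A = D"
  shows "\<exists>Ci. Ci \<in> carrier_mat m m \<and> C * Ci = 1\<^sub>m m \<and> Ci * C = 1\<^sub>m m \<and>
    star_mat q C * Ci = B * (star_mat q D * Di) * A"
proof -
  define sA sB where "sA = star_mat q A" and "sB = star_mat q B"
  have star_carr: "sA \<in> carrier_mat m m" "sB \<in> carrier_mat m m" "star_mat q D \<in> carrier_mat m m"
    using carr by (simp_all add: sA_def sB_def)
  have star_inv: "sA * sB = 1\<^sub>m m" "sB * sA = 1\<^sub>m m"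
    using star_mat_inverse carr inv by (simp_all add: sA_def sB_def)
  note rw = carr star_carr mult_carrier_mat[of _ m m _ m] assoc_mult_mat[of _ m m _ m _ m] left_mult_one_mat[of _ m m] right_mult_one_mat[of _ m m]
    mult_mat_inverse_cancel[OF carr(1,2) inv(1), where k = m] mult_mat_inverse_cancel[OF carr(2,1) inv(2), where k = m]
    mult_mat_inverse_cancel[OF carr(4,5) inv(3), where k = m] mult_mat_inverse_cancel[OF carr(5,4) inv(4), where k = m]
    mult_mat_inverse_cancel[OF star_carr(1,2) star_inv(1), where k = m] mult_mat_inverse_cancel[OF star_carr(2,1) star_inv(2), where k = m]
    inv star_inv
  have C: "C = B * (D * sB)"
    unfolding congr[symmetric] sA_def[symmetric] by (simp only: rw)
  have "star_mat q C = star_mat q (D * sB) * star_mat q B"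
    unfolding C using carr star_carr by (intro star_mat_mult) auto
  also have "\<dots> = B * star_mat q D * sB"
    using star_mat_mult[of D m m sB m] star_mat_star_mat[OF \<open>elements_mat B \<subseteq> K\<close>] carr star_carr
    by (simp add: sB_def)
  finally have sC: "star_mat q C = B * (star_mat q D * sB)" by (simp only: rw)
  show ?thesis
  proof (intro exI[of _ "sA * (Di * A)"] conjI)
    show "sA * (Di * A) \<in> carrier_mat m m" by (simp only: rw)
    show "C * (sA * (Di * A)) = 1\<^sub>m m" unfolding C by (simp only: rw)
    show "sA * (Di * A) * C = 1\<^sub>m m" unfolding C by (simp only: rw)
    show "star_mat q C * (sA * (Di * A)) = B * (star_mat q D * Di) * A" unfolding sC by (simp only: rw)
  qed
qed

lemma star_congruent_of_similar:
  fixes C Ci P Q D :: "'a mat"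
  assumes carr: "C \<in> carrier_mat m m" "Ci \<in> carrier_mat m m" "P \<in> carrier_mat m m"
      "Q \<in> carrier_mat m m" "D \<in> carrier_mat m m"
    and inv: "Ci * C = 1\<^sub>m m" "Q * P = 1\<^sub>m m"
    and "elements_mat Q \<subseteq> K" and sim: "star_mat q C * Ci = P * D * Q"
  shows "star_mat q (Q * C * star_mat q Q) = D * (Q * C * star_mat q Q)"
proof -
  have sC_carr: "star_mat q C \<in> carrier_mat m m" "star_mat q Q \<in> carrier_mat m m" using carr by simp_all
  note rw = carr sC_carr mult_carrier_mat[of _ m m _ m] assoc_mult_mat[of _ m m _ m _ m] left_mult_one_mat[of _ m m] right_mult_one_mat[of _ m m]
    mult_mat_inverse_cancel[OF carr(2,1) inv(1), where k = m] mult_mat_inverse_cancel[OF carr(4,3) inv(2), where k = m] inv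
  have sC: "star_mat q C = P * D * Q * C"
  proof -
    have "star_mat q C = star_mat q C * (Ci * C)" using inv(1) right_mult_one_mat[OF sC_carr(1)] by simp
    also have "\<dots> = P * D * Q * C" unfolding sim[symmetric] by (simp only: rw)
    finally show ?thesis .
  qed
  have "star_mat q (Q * C * star_mat q Q) = star_mat q (star_mat q Q) * star_mat q (Q * C)"
    using carr by (intro star_mat_mult) auto
  also have "\<dots> = Q * (star_mat q C * star_mat q Q)"
    using star_mat_mult[OF carr(4,1)] star_mat_star_mat[OF \<open>elements_mat Q \<subseteq> K\<close>] by simp
  also have "\<dots> = D * (Q * C * star_mat q Q)" unfolding sC by (simp only: rw)
  finally show ?thesis .
qed

end

section \<open>Sesquilinear forms\<close>

locale sesq_form = field_q2n q n K for q n and K :: "'a::{finite,field} set" +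
  fixes \<sigma> :: "'a \<Rightarrow> 'a \<Rightarrow> 'a"
  assumes sesquilinear: "sesquilinear q \<sigma>"
begin

lemma sesq_mem_K: "\<sigma> u v \<in> K"
  and sesq_left: "c \<in> K \<Longrightarrow> \<sigma> (c * u + u') v = c * \<sigma> u v + \<sigma> u' v"
  and sesq_add_right: "\<sigma> u (v + v') = \<sigma> u v + \<sigma> u v'"
  and sesq_scale_right: "c \<in> K \<Longrightarrow> \<sigma> u (c * v) = c ^ q * \<sigma> u v"
  using sesquilinear by (simp_all add: sesquilinear_def K_def)

lemma sesq_add_left: "\<sigma> (u + u') v = \<sigma> u v + \<sigma> u' v"
  using sesq_left[of 1 u u' v] by simp

lemma sesq_zero_left [simp]: "\<sigma> 0 v = 0"
  using sesq_add_left[of 0 0 v] by (metis add_cancel_right_right)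

lemma sesq_zero_right [simp]: "\<sigma> u 0 = 0"
  using sesq_add_right[of u 0 0] by (metis add_cancel_right_right)

lemma sesq_scale_left: "c \<in> K \<Longrightarrow> \<sigma> (c * u) v = c * \<sigma> u v"
  using sesq_left[of c u 0 v] by simp

lemma sesq_diff_left: "\<sigma> (u - u') v = \<sigma> u v - \<sigma> u' v"
  using sesq_left[of "-1" u' u v] by simp

lemma sesq_diff_right: "\<sigma> u (v - v') = \<sigma> u v - \<sigma> u v'"
  using sesq_add_right[of u v "(-1) * v'"] sesq_scale_right[of "-1" u v'] frobenius_minus_q[of 1] by simp

lemma sesq_sum_left:
  "(\<And>i. i \<in> A \<Longrightarrow> c i \<in> K) \<Longrightarrow> \<sigma> (\<Sum>i\<in>A. c i * x i) v = (\<Sum>i\<in>A. c i * \<sigma> (x i) v)"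
  by (induction A rule: infinite_finite_induct) (simp_all add: sesq_left)

lemma sesq_sum_right:
  "(\<And>i. i \<in> A \<Longrightarrow> c i \<in> K) \<Longrightarrow> \<sigma> u (\<Sum>i\<in>A. c i * x i) = (\<Sum>i\<in>A. c i ^ q * \<sigma> u (x i))"
  by (induction A rule: infinite_finite_induct) (simp_all add: sesq_add_right sesq_scale_right)

lemma sesq_lincomb_left:
  "\<forall>i<length vs. c i \<in> K \<Longrightarrow> \<sigma> (lincomb c vs) v = (\<Sum>i<length vs. c i * \<sigma> (vs ! i) v)"
  by (rule sesq_sum_left) simp

lemma sesq_lincomb_right:
  "\<forall>i<length vs. c i \<in> K \<Longrightarrow> \<sigma> u (lincomb c vs) = (\<Sum>i<length vs. c i ^ q * \<sigma> u (vs ! i))"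
  by (rule sesq_sum_right) simp

lemma mem_rad_iff: "u \<in> rad \<sigma> \<longleftrightarrow> (\<forall>v. \<sigma> u v = 0)"
  by (simp add: rad_def)

lemma mem_rad_adj_iff: "u \<in> rad (adj_form q \<sigma>) \<longleftrightarrow> (\<forall>v. \<sigma> v u = 0)"
  using q_ge_2 by (simp add: rad_def adj_form_def)

lemma K_subspace_rad_inter: "K_subspace (rad \<sigma> \<inter> rad (adj_form q \<sigma>))"
  by (auto simp: K_subspace_def mem_rad_iff mem_rad_adj_iff sesq_add_left sesq_add_right
      sesq_scale_left sesq_scale_right)

lemma orthogonal_K_indep:
  assumes "\<And>i j. i < length ws \<Longrightarrow> j < length ws \<Longrightarrow> i \<noteq> j \<Longrightarrow> \<sigma> (ws ! i) (ws ! j) = 0"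
    and "\<And>i. i < length ws \<Longrightarrow> \<sigma> (ws ! i) (ws ! i) \<noteq> 0"
  shows "indep_K ws"
  unfolding K_indep_iff
proof (intro allI impI)
  fix c j assume c: "(\<forall>i<length ws. c i \<in> K) \<and> lincomb c ws = 0" and j: "j < length ws"
  have "0 = \<sigma> (lincomb c ws) (ws ! j)" using c by simp
  also have "\<dots> = (\<Sum>i<length ws. c i * \<sigma> (ws ! i) (ws ! j))"
    using c by (intro sesq_sum_left) blast
  also have "\<dots> = c j * \<sigma> (ws ! j) (ws ! j)"
    using assms(1) j by (subst sum.remove[of _ j]) (auto intro!: sum.neutral)
  finally show "c j = 0" using assms(2)[OF j] by simp
qed

lemma coeff_mat_change_basis:
  assumes "A \<in> carrier_mat k (length vs)" "elements_mat A \<subseteq> K" "length ws = k"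
    and "\<And>i. i < k \<Longrightarrow> ws ! i = lincomb (\<lambda>j. A $$ (i, j)) vs"
  shows "coeff_mat \<sigma> ws = A * coeff_mat \<sigma> vs * star_mat q A"
proof (rule eq_matI)
  let ?m = "length vs" and ?C = "coeff_mat \<sigma> vs"
  have C: "?C \<in> carrier_mat ?m ?m" by (simp add: coeff_mat_def)
  have AK: "A $$ (i, j) \<in> K" if "i < k" "j < ?m" for i j
    using assms(1,2) that by (auto simp: elements_mat_subset_iff)
  fix i l assume "i < dim_row (A * ?C * star_mat q A)" "l < dim_col (A * ?C * star_mat q A)"
  hence il: "i < k" "l < k" using assms(1) by auto
  have "coeff_mat \<sigma> ws $$ (i, l) = \<sigma> (lincomb (\<lambda>j. A $$ (i, j)) vs) (lincomb (\<lambda>j. A $$ (l, j)) vs)"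
    using il assms(3,4) by (simp add: coeff_mat_def)
  also have "\<dots> = (\<Sum>j<?m. A $$ (i, j) * \<sigma> (vs ! j) (lincomb (\<lambda>j. A $$ (l, j)) vs))"
    using AK il by (intro sesq_sum_left) auto
  also have "\<dots> = (\<Sum>j<?m. A $$ (i, j) * (\<Sum>j'<?m. A $$ (l, j') ^ q * \<sigma> (vs ! j) (vs ! j')))"
    using AK il by (intro sum.cong refl arg_cong2[where f = "(*)"] sesq_sum_right) auto
  also have "\<dots> = (\<Sum>j<?m. \<Sum>j'<?m. A $$ (i, j) * \<sigma> (vs ! j) (vs ! j') * A $$ (l, j') ^ q)"
    by (simp add: sum_distrib_left mult_ac)
  also have "\<dots> = (\<Sum>j'<?m. (\<Sum>j<?m. A $$ (i, j) * ?C $$ (j, j')) * star_mat q A $$ (j', l))"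
    using assms(1) il by (subst sum.swap) (simp add: coeff_mat_def index_star_mat sum_distrib_right)
  also have "\<dots> = (\<Sum>j'<?m. (A * ?C) $$ (i, j') * star_mat q A $$ (j', l))"
    using il by (intro sum.cong refl) (subst index_mult_mat_sum[OF assms(1) C], auto)
  also have "\<dots> = (A * ?C * star_mat q A) $$ (i, l)"
    using assms(1) C il by (subst index_mult_mat_sum[of _ k ?m _ k]) auto
  finally show "coeff_mat \<sigma> ws $$ (i, l) = (A * ?C * star_mat q A) $$ (i, l)" .
qed (use assms in \<open>auto simp: coeff_mat_def\<close>)

definition pairwise_orthogonal :: "'a list \<Rightarrow> bool" where
  "pairwise_orthogonal ws \<longleftrightarrow> (\<forall>i<length ws. \<forall>j<length ws. i \<noteq> j \<longrightarrow> \<sigma> (ws ! i) (ws ! j) = 0)"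

definition nondegenerate_on :: "'a set \<Rightarrow> bool" where
  "nondegenerate_on U \<longleftrightarrow> (\<forall>u\<in>U. (\<forall>v\<in>U. \<sigma> u v = 0) \<longrightarrow> u = 0)"

text \<open>If \<open>v\<^sub>1, \<dots>, v\<^sub>r\<close> is a basis of the reduced
  domain in which \<open>C\<^sup>*C\<^sup>-\<^sup>1\<close> is diagonal, then \<open>v\<^sub>i\<close> is such an eigenvector for the \<open>i\<close>-th diagonal entry.\<close>

definition adj_eigenvector :: "'a \<Rightarrow> 'a \<Rightarrow> bool" where
  "adj_eigenvector e v \<longleftrightarrow> (\<forall>y. adj_form q \<sigma> v y = e * \<sigma> v y)"

lemma adj_eigenvector_iff: "adj_eigenvector e v \<longleftrightarrow> (\<forall>y. \<sigma> y v ^ q = e * \<sigma> v y)"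
  by (simp add: adj_eigenvector_def adj_form_def)

lemma adj_eigenvector_lincomb2:
  assumes "adj_eigenvector e u" "adj_eigenvector e v" "a \<in> K" "b \<in> K"
  shows "adj_eigenvector e (a * u + b * v)"
  unfolding adj_eigenvector_iff
proof
  fix y
  have "\<sigma> y (a * u + b * v) ^ q = (a ^ q * \<sigma> y u + b ^ q * \<sigma> y v) ^ q"
    using assms(3,4) by (simp add: sesq_add_right sesq_scale_right)
  also have "\<dots> = (a ^ q) ^ q * \<sigma> y u ^ q + (b ^ q) ^ q * \<sigma> y v ^ q"
    by (simp add: frobenius_add_q power_mult_distrib)
  also have "\<dots> = e * \<sigma> (a * u + b * v) y"
    using assms by (simp add: adj_eigenvector_iff K_power_q_q sesq_add_left sesq_scale_left algebra_simps)
  finally show "\<sigma> y (a * u + b * v) ^ q = e * \<sigma> (a * u + b * v) y" .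
qed

lemma adj_eigenvector_scale: "adj_eigenvector e u \<Longrightarrow> a \<in> K \<Longrightarrow> adj_eigenvector e (a * u)"
  using adj_eigenvector_lincomb2[of e u u a 0] by simp

lemma adj_eigenvector_K_span:
  assumes "\<And>y. y \<in> set ys \<Longrightarrow> \<sigma> y v ^ q = e * \<sigma> v y" "y \<in> span_K ys"
  shows "\<sigma> y v ^ q = e * \<sigma> v y"
proof -
  obtain c where c: "\<forall>i<length ys. c i \<in> K" "y = lincomb c ys" using assms(2) by (auto simp: K_span_eq)
  have "\<sigma> y v = (\<Sum>i<length ys. c i * \<sigma> (ys ! i) v)"
    unfolding c(2) using c(1) by (intro sesq_sum_left) auto
  hence "\<sigma> y v ^ q = (\<Sum>i<length ys. c i ^ q * \<sigma> (ys ! i) v ^ q)"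
    by (simp add: frobenius_sum_q power_mult_distrib)
  also have "\<dots> = (\<Sum>i<length ys. c i ^ q * (e * \<sigma> v (ys ! i)))"
    using assms(1) by (intro sum.cong refl) simp
  also have "\<dots> = e * (\<Sum>i<length ys. c i ^ q * \<sigma> v (ys ! i))"
    by (simp add: sum_distrib_left mult_ac)
  also have "(\<Sum>i<length ys. c i ^ q * \<sigma> v (ys ! i)) = \<sigma> v y"
    unfolding c(2) using c(1) by (intro sesq_sum_right[symmetric]) auto
  finally show ?thesis .
qed

lemma norm_power_q_minus_1:
  assumes "d \<in> K" "d \<noteq> 0"
  shows "(d ^ (q - 1)) ^ q * d ^ (q - 1) = 1"
proof -
  have "Suc (q\<^sup>2 - 1) = q\<^sup>2" using q2_ge_4 by simp
  hence "d * d ^ (q\<^sup>2 - 1) = d ^ q\<^sup>2" by (metis power_Suc)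
  hence "d ^ (q\<^sup>2 - 1) = 1" using assms by (simp add: mem_K_iff)
  moreover have "(q - 1) * q + (q - 1) = q\<^sup>2 - 1"
    using q_ge_2 by (simp add: power2_eq_square algebra_simps)
  ultimately show ?thesis by (metis power_add power_mult)
qed

lemma adj_eigenvalue_unique:
  assumes "adj_eigenvector e u" "adj_eigenvector e' v" "\<sigma> u v \<noteq> 0" "e' ^ q * e' = 1"
  shows "e = e'"
proof -
  have "\<sigma> u v = (\<sigma> u v ^ q) ^ q" using K_power_q_q[OF sesq_mem_K] by simp
  also have "\<dots> = e' ^ q * e * \<sigma> u v"
    using assms(1,2) by (simp add: adj_eigenvector_iff power_mult_distrib mult.assoc)
  finally have "e' ^ q * e = e' ^ q * e'" using assms(3,4) by simp
  moreover have "e' ^ q \<noteq> 0" using assms(4) by auto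
  ultimately show ?thesis by (metis mult_left_cancel)
qed

definition adj_eigenbasis :: "'a set \<Rightarrow> 'a list \<Rightarrow> 'a list \<Rightarrow> bool" where
  "adj_eigenbasis U vs ds \<longleftrightarrow> basis_K U vs \<and> length ds = length vs \<and>
     (\<forall>i<length vs. ds ! i \<in> K \<and> ds ! i \<noteq> 0 \<and> adj_eigenvector ((ds ! i) ^ (q - 1)) (vs ! i))"

lemma exists_anisotropic_combination:
  assumes "\<sigma> v v' \<noteq> 0"
  shows "\<exists>c\<in>K. \<sigma> (v + c * v') (v + c * v') \<noteq> 0"
proof -
  obtain c where c: "c \<in> K"
    "\<sigma> v v + \<sigma> v' v * c + \<sigma> v v' * c ^ q + \<sigma> v' v' * c ^ (q + 1) \<noteq> 0"
    using exists_K_nonroot[OF assms] by blast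
  have "\<sigma> (v + c * v') (v + c * v') = \<sigma> v v + \<sigma> v' v * c + \<sigma> v v' * c ^ q + \<sigma> v' v' * c ^ (q + 1)"
    using c(1) by (simp add: sesq_add_left sesq_add_right sesq_scale_left sesq_scale_right algebra_simps)
  thus ?thesis using c by metis
qed

lemma exists_scaled_to_value:
  assumes "adj_eigenvector (d ^ (q - 1)) u" "\<sigma> u u \<noteq> 0" "d \<in> K" "d \<noteq> 0"
  shows "\<exists>\<mu>\<in>K. \<mu> \<noteq> 0 \<and> \<sigma> (\<mu> * u) (\<mu> * u) = d"
proof -
  define s where "s = \<sigma> u u"
  have s: "s \<in> K" "s \<noteq> 0" "s ^ q = d ^ (q - 1) * s"
    using sesq_mem_K assms(1,2) by (auto simp: s_def adj_eigenvector_iff)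
  have "d ^ q = d * d ^ (q - 1)" using q_ge_2 by (simp flip: power_Suc)
  hence "(d / s) ^ q = d / s" using s assms(4) by (simp add: power_divide)
  then obtain \<mu> where \<mu>: "\<mu> \<in> K" "\<mu> ^ (q + 1) = d / s"
    using K_norm_surj[of "d / s"] s assms(3,4) by auto
  hence "\<mu> \<noteq> 0" using s assms(4) by auto
  moreover have "\<sigma> (\<mu> * u) (\<mu> * u) = \<mu> ^ (q + 1) * s"
    using \<mu>(1) by (simp add: sesq_scale_left sesq_scale_right s_def)
  ultimately show ?thesis using \<mu> s by auto
qed

lemma nondegenerate_basis_partner:
  assumes "basis_K U vs" "nondegenerate_on U" "u \<in> U" "u \<noteq> 0"
  shows "\<exists>j<length vs. \<sigma> u (vs ! j) \<noteq> 0"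
proof (rule ccontr)
  assume none: "\<not> ?thesis"
  have "\<sigma> u y = 0" if "y \<in> U" for y
  proof -
    obtain c where c: "\<forall>i<length vs. c i \<in> K" "y = lincomb c vs"
      using assms(1) \<open>y \<in> U\<close> by (auto simp: K_basis_of_def K_span_eq)
    hence "\<sigma> u y = (\<Sum>i<length vs. c i ^ q * \<sigma> u (vs ! i))" by (auto intro: sesq_sum_right)
    thus ?thesis using none by simp
  qed
  thus False using assms(2-4) by (auto simp: nondegenerate_on_def)
qed

text \<open>If \<open>v\<close> is isotropic, nondegeneracy yields a basis vector \<open>v\<^sub>j\<close> with \<open>\<sigma>(v, v\<^sub>j) \<noteq> 0\<close>; it lies in the
  same eigenspace by \<open>adj_eigenvalue_unique\<close>, and \<open>v + c v\<^sub>j\<close> is anisotropic for suitable \<open>c\<close>.\<close>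

lemma exists_anisotropic_adj_eigenvector:
  assumes "adj_eigenbasis U (v # vs) (d # ds)" "nondegenerate_on U"
  shows "\<exists>x\<in>span_K vs. adj_eigenvector (d ^ (q - 1)) (v + x) \<and> \<sigma> (v + x) (v + x) \<noteq> 0"
proof (cases "\<sigma> v v = 0")
  case False
  thus ?thesis using assms(1) K_subspace_0[OF K_subspace_K_span] by (force simp: adj_eigenbasis_def)
next
  case True
  have basis: "basis_K U (v # vs)" and eig: "\<And>i. i < Suc (length vs) \<Longrightarrow>
      (d # ds) ! i \<in> K \<and> (d # ds) ! i \<noteq> 0 \<and> adj_eigenvector (((d # ds) ! i) ^ (q - 1)) ((v # vs) ! i)"
    using assms(1) by (auto simp: adj_eigenbasis_def)
  have "v \<in> U" "v \<noteq> 0"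
    using basis K_indep_nth_nonzero[of "v # vs" 0] nth_mem_K_span[of 0 "v # vs"] by (auto simp: K_basis_of_def)
  then obtain j where j: "j < Suc (length vs)" "\<sigma> v ((v # vs) ! j) \<noteq> 0"
    using nondegenerate_basis_partner[OF basis assms(2)] by auto
  then obtain j' where j': "j = Suc j'" "j' < length vs" using True by (cases j) auto
  have "(d # ds) ! j \<in> K" "(d # ds) ! j \<noteq> 0" using eig[OF j(1)] by auto
  hence "d ^ (q - 1) = (ds ! j') ^ (q - 1)"
    using adj_eigenvalue_unique[OF _ _ j(2) norm_power_q_minus_1] eig[OF j(1)] eig[of 0] j' by auto
  hence eig_j: "adj_eigenvector (d ^ (q - 1)) (vs ! j')" using eig[OF j(1)] j' by simp
  obtain c where c: "c \<in> K" "\<sigma> (v + c * vs ! j') (v + c * vs ! j') \<noteq> 0"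
    using exists_anisotropic_combination j j' by auto
  have "c * vs ! j' \<in> span_K vs"
    using c(1) j'(2) by (intro K_subspace_scale[OF K_subspace_K_span] nth_mem_K_span)
  moreover have "adj_eigenvector (d ^ (q - 1)) (v + c * vs ! j')"
    using adj_eigenvector_lincomb2[OF _ eig_j, of v 1 c] eig[of 0] c(1) by simp
  ultimately show ?thesis using c(2) by blast
qed

lemma adj_eigenvector_orth_proj:
  assumes "adj_eigenvector (d ^ (q - 1)) w" "\<sigma> w w = d" "d \<in> K" "d \<noteq> 0"
    and "adj_eigenvector (d' ^ (q - 1)) v" "d' \<in> K" "d' \<noteq> 0"
  shows "adj_eigenvector (d' ^ (q - 1)) (v - (\<sigma> v w / d) * w)"
proof (cases "\<sigma> v w = 0")
  case False
  hence "d' ^ (q - 1) = d ^ (q - 1)"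
    using adj_eigenvalue_unique[OF assms(5,1) _ norm_power_q_minus_1[OF assms(3,4)]] by simp
  thus ?thesis
    using adj_eigenvector_lincomb2[OF assms(5), of w 1 "- (\<sigma> v w / d)"] assms(1,3) sesq_mem_K by simp
qed (use assms(5) in simp)

lemma K_subspace_orth: "K_subspace U \<Longrightarrow> K_subspace {v\<in>U. \<sigma> v w = 0}"
  by (simp add: K_subspace_def sesq_add_left sesq_scale_left)

lemma basis_orth_complement:
  assumes "basis_K U (w # vs)" "\<sigma> w w \<noteq> 0" "\<And>v. v \<in> set vs \<Longrightarrow> \<sigma> v w = 0"
  shows "basis_K {v\<in>U. \<sigma> v w = 0} vs"
proof -
  have U: "U = span_K (w # vs)" "indep_K (w # vs)" using assms(1) by (auto simp: K_basis_of_def)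
  have "K_subspace U" using U(1) K_subspace_K_span by simp
  hence "span_K vs \<subseteq> {v\<in>U. \<sigma> v w = 0}"
    using U(1) assms(3) K_span_append(2)[of vs "[w]"] set_subset_K_span[of vs]
    by (intro K_span_subset K_subspace_orth) auto
  moreover have "v \<in> span_K vs" if v: "v \<in> U" "\<sigma> v w = 0" for v
  proof -
    obtain c where c: "\<forall>i<length (w # vs). c i \<in> K" "v = lincomb c (w # vs)"
      using v(1) U(1) unfolding K_span_eq by blast
    have "v = c 0 * w + lincomb (\<lambda>i. c (Suc i)) vs"
      using c(2) by (simp add: sum.lessThan_Suc_shift del: sum.lessThan_Suc)
    have "\<sigma> (lincomb (\<lambda>i. c (Suc i)) vs) w = (\<Sum>i<length vs. c (Suc i) * \<sigma> (vs ! i) w)"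
      using c(1) by (intro sesq_sum_left) auto
    also have "\<dots> = 0" using assms(3) by simp
    finally have "c 0 * \<sigma> w w = 0" using v(2) c(1) \<open>v = c 0 * w + _\<close> by (simp add: sesq_left)
    hence "v = lincomb (\<lambda>i. c (Suc i)) vs" using \<open>v = c 0 * w + _\<close> assms(2) by simp
    thus ?thesis using c(1) by (auto intro: lincomb_mem_K_span)
  qed
  ultimately show ?thesis using K_indep_ConsD[OF U(2)] by (auto simp: K_basis_of_def)
qed

lemma nondegenerate_on_orth_complement:
  assumes "K_subspace U" "w \<in> U" "\<sigma> w w = d" "d \<noteq> 0" "nondegenerate_on U"
  shows "nondegenerate_on {v\<in>U. \<sigma> v w = 0}"
  unfolding nondegenerate_on_def
proof (intro ballI impI)
  fix x assume x: "x \<in> {v\<in>U. \<sigma> v w = 0}" and orth: "\<forall>v\<in>{v\<in>U. \<sigma> v w = 0}. \<sigma> x v = 0"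
  have "\<sigma> x v = 0" if "v \<in> U" for v
  proof -
    define a where "a = \<sigma> v w / d"
    have a: "a \<in> K" using sesq_mem_K[of v w] sesq_mem_K[of w w] assms(3) by (simp add: a_def)
    have "a * w \<in> U" by (rule K_subspace_scale[OF assms(1) a assms(2)])
    hence "v - a * w \<in> U" by (rule K_subspace_diff[OF assms(1) that])
    moreover have "\<sigma> (v - a * w) w = 0"
      using assms(3,4) sesq_scale_left[OF a, of w w] by (simp add: sesq_diff_left a_def)
    ultimately have "v - a * w \<in> {v\<in>U. \<sigma> v w = 0}" by simp
    hence "\<sigma> x (v - a * w) = 0" using orth by blast
    thus ?thesis using x a by (simp add: sesq_diff_right sesq_scale_right)
  qed
  thus "x = 0" using x assms(5) by (auto simp: nondegenerate_on_def)
qed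

lemma adj_eigenbasis_split:
  assumes eb: "adj_eigenbasis U (v # vs) (d # ds)" and nd: "nondegenerate_on U"
  shows "\<exists>w vs'. w \<in> U \<and> \<sigma> w w = d \<and> adj_eigenvector (d ^ (q - 1)) w \<and>
    adj_eigenbasis {u\<in>U. \<sigma> u w = 0} vs' ds"
proof -
  have basis: "basis_K U (v # vs)" and len: "length ds = length vs"
    and eig: "\<And>i. i < Suc (length vs) \<Longrightarrow>
      (d # ds) ! i \<in> K \<and> (d # ds) ! i \<noteq> 0 \<and> adj_eigenvector (((d # ds) ! i) ^ (q - 1)) ((v # vs) ! i)"
    using eb by (auto simp: adj_eigenbasis_def)
  have U: "U = span_K (v # vs)" using basis by (simp add: K_basis_of_def)
  have d: "d \<in> K" "d \<noteq> 0" using eig[of 0] by simp_all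
  obtain x where x: "x \<in> span_K vs" "adj_eigenvector (d ^ (q - 1)) (v + x)" "\<sigma> (v + x) (v + x) \<noteq> 0"
    using exists_anisotropic_adj_eigenvector[OF eb nd] by blast
  obtain \<mu> where \<mu>: "\<mu> \<in> K" "\<mu> \<noteq> 0" "\<sigma> (\<mu> * (v + x)) (\<mu> * (v + x)) = d"
    using exists_scaled_to_value[OF x(2,3) d] by blast
  define w where "w = \<mu> * (v + x)"
  define vs' where "vs' = map (\<lambda>u. u - (\<sigma> u w / d) * w) vs"
  have ww: "\<sigma> w w = d" using \<mu>(3) by (simp add: w_def)
  have w_eig: "adj_eigenvector (d ^ (q - 1)) w" using adj_eigenvector_scale[OF x(2) \<mu>(1)] by (simp add: w_def)
  have "span_K (w # vs') = U"
    using K_span_Cons_subtract[of "\<lambda>u. \<sigma> u w / d" w vs] K_span_Cons_replace[OF \<mu>(1,2) x(1), of v]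
      U sesq_mem_K d by (simp add: w_def vs'_def)
  moreover from this have "indep_K (w # vs')"
    using basis by (intro K_indep_of_K_span_eq) (auto simp: vs'_def)
  ultimately have basis': "basis_K U (w # vs')" by (simp add: K_basis_of_def)
  have orth: "\<sigma> u w = 0" if u: "u \<in> set vs'" for u
  proof -
    obtain u0 where "u = u0 - (\<sigma> u0 w / d) * w" using u unfolding vs'_def set_map by blast
    moreover have "\<sigma> ((\<sigma> u0 w / d) * w) w = \<sigma> u0 w" using sesq_scale_left[of "\<sigma> u0 w / d" w w] sesq_mem_K d ww by simp
    ultimately show ?thesis by (simp add: sesq_diff_left)
  qed
  have "adj_eigenbasis {u\<in>U. \<sigma> u w = 0} vs' ds"
    unfolding adj_eigenbasis_def
  proof (intro conjI allI impI)
    show "basis_K {u\<in>U. \<sigma> u w = 0} vs'" by (rule basis_orth_complement[OF basis' _ orth]) (use ww d in simp)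
    show "length ds = length vs'" using len by (simp add: vs'_def)
    fix i assume "i < length vs'"
    hence i: "Suc i < Suc (length vs)" by (simp add: vs'_def)
    show "ds ! i \<in> K" "ds ! i \<noteq> 0" using eig[OF i] by simp_all
    show "adj_eigenvector ((ds ! i) ^ (q - 1)) (vs' ! i)"
      using adj_eigenvector_orth_proj[OF w_eig ww d] eig[OF i] i by (simp add: vs'_def)
  qed
  moreover have "w \<in> U" using basis' nth_mem_K_span[of 0 "w # vs'"] by (simp add: K_basis_of_def)
  ultimately show ?thesis using ww w_eig by blast
qed

lemma exists_orthogonal_with_values:
  assumes "adj_eigenbasis U vs ds" "nondegenerate_on U"
  shows "\<exists>ws. length ws = length ds \<and> set ws \<subseteq> U \<and> pairwise_orthogonal ws \<and>
    (\<forall>i<length ds. \<sigma> (ws ! i) (ws ! i) = ds ! i)"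
  using assms
proof (induction ds arbitrary: U vs)
  case Nil
  show ?case by (intro exI[of _ "[]"]) (simp add: pairwise_orthogonal_def)
next
  case (Cons d ds)
  obtain v vs0 where "vs = v # vs0" using Cons.prems(1) by (cases vs) (auto simp: adj_eigenbasis_def)
  then obtain w vs' where w: "w \<in> U" "\<sigma> w w = d" "adj_eigenvector (d ^ (q - 1)) w"
    and eb': "adj_eigenbasis {u\<in>U. \<sigma> u w = 0} vs' ds"
    using adj_eigenbasis_split Cons.prems by blast
  have "K_subspace U" using Cons.prems(1) K_subspace_K_span by (auto simp: adj_eigenbasis_def K_basis_of_def)
  have "\<forall>i<length vs. (d # ds) ! i \<noteq> 0" using Cons.prems(1) by (simp add: adj_eigenbasis_def)
  hence "d \<noteq> 0" using \<open>vs = v # vs0\<close> by (metis nth_Cons_0 length_Cons zero_less_Suc)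
  hence "nondegenerate_on {u\<in>U. \<sigma> u w = 0}"
    using nondegenerate_on_orth_complement \<open>K_subspace U\<close> w(1,2) Cons.prems(2) by blast
  then obtain ws where ws: "length ws = length ds" "set ws \<subseteq> {u\<in>U. \<sigma> u w = 0}" "pairwise_orthogonal ws"
      "\<forall>i<length ds. \<sigma> (ws ! i) (ws ! i) = ds ! i"
    using Cons.IH[OF eb'] by blast
  have "\<sigma> u w = 0" "\<sigma> w u = 0" if "u \<in> set ws" for u
  proof -
    show "\<sigma> u w = 0" using ws(2) that by auto
    moreover have "\<sigma> u w ^ q = d ^ (q - 1) * \<sigma> w u" using w(3) by (simp add: adj_eigenvector_iff)
    moreover have "(0::'a) ^ q = 0" using q_ge_2 by simp
    ultimately have "d ^ (q - 1) * \<sigma> w u = 0" by simp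
    thus "\<sigma> w u = 0" using \<open>d \<noteq> 0\<close> by simp
  qed
  hence "pairwise_orthogonal (w # ws)"
    using ws(3) by (auto simp: pairwise_orthogonal_def nth_Cons')
  thus ?case using w ws by (intro exI[of _ "w # ws"]) (auto simp: nth_Cons')
qed

lemma sesq_zero_iff_on_basis:
  assumes "basis_K UNIV es"
  shows "(\<forall>v. \<sigma> u v = 0) \<longleftrightarrow> (\<forall>j<length es. \<sigma> u (es ! j) = 0)"
    and "(\<forall>v. \<sigma> v u = 0) \<longleftrightarrow> (\<forall>j<length es. \<sigma> (es ! j) u = 0)"
proof -
  have coords: "\<exists>c. (\<forall>i<length es. c i \<in> K) \<and> v = lincomb c es" for v
    using assms by (auto simp: K_basis_of_def K_span_eq)
  show "(\<forall>v. \<sigma> u v = 0) \<longleftrightarrow> (\<forall>j<length es. \<sigma> u (es ! j) = 0)"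
  proof (intro iffI allI impI)
    fix v assume "\<forall>j<length es. \<sigma> u (es ! j) = 0"
    thus "\<sigma> u v = 0" using coords[of v] by (auto simp: sesq_lincomb_right)
  qed simp
  show "(\<forall>v. \<sigma> v u = 0) \<longleftrightarrow> (\<forall>j<length es. \<sigma> (es ! j) u = 0)"
  proof (intro iffI allI impI)
    fix v assume "\<forall>j<length es. \<sigma> (es ! j) u = 0"
    thus "\<sigma> v u = 0" using coords[of v] by (auto simp: sesq_lincomb_left)
  qed simp
qed

lemma sesq_lincomb_orthogonal:
  assumes "pairwise_orthogonal es" "\<forall>i<length es. c i \<in> K" "j < length es"
  shows "\<sigma> (lincomb c es) (es ! j) = c j * \<sigma> (es ! j) (es ! j)"
    and "\<sigma> (es ! j) (lincomb c es) = c j ^ q * \<sigma> (es ! j) (es ! j)"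
  using assms by (simp_all add: sesq_lincomb_left sesq_lincomb_right pairwise_orthogonal_def,
      (subst sum.remove[of _ j], auto intro!: sum.neutral)+)

lemma rad_eq_of_orthogonal_basis:
  assumes "basis_K UNIV es" "pairwise_orthogonal es"
  shows "rad \<sigma> = rad (adj_form q \<sigma>)"
proof -
  have "(\<forall>j<length es. \<sigma> u (es ! j) = 0) \<longleftrightarrow> (\<forall>j<length es. \<sigma> (es ! j) u = 0)" for u
  proof -
    obtain c where c: "\<forall>i<length es. c i \<in> K" "u = lincomb c es"
      using assms(1) by (auto simp: K_basis_of_def K_span_eq)
    thus ?thesis using sesq_lincomb_orthogonal[OF assms(2) c(1)] q_ge_2 by auto
  qed
  thus ?thesis
    by (auto simp: mem_rad_iff mem_rad_adj_iff sesq_zero_iff_on_basis[OF assms(1)])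
qed

lemma coeff_mat_orthogonal:
  assumes "pairwise_orthogonal ws"
  shows "coeff_mat \<sigma> ws = diag_of_list (map (\<lambda>w. \<sigma> w w) ws)"
  using assms by (intro eq_matI) (auto simp: coeff_mat_def index_diag_of_list pairwise_orthogonal_def)

lemma diagonal_mat_coeff_mat_iff: "diagonal_mat (coeff_mat \<sigma> es) \<longleftrightarrow> pairwise_orthogonal es"
  by (auto simp: diagonal_mat_def coeff_mat_def pairwise_orthogonal_def)

lemma conj_inverse_similar_of_orthogonal_basis:
  assumes bs: "basis_K W bs" and ws: "basis_K W ws" "pairwise_orthogonal ws"
    and ds: "map (\<lambda>w. \<sigma> w w) ws = ds" "0 \<notin> set ds"
  shows "\<exists>Ci. Ci \<in> carrier_mat (length bs) (length bs) \<and>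
    coeff_mat \<sigma> bs * Ci = 1\<^sub>m (length bs) \<and> Ci * coeff_mat \<sigma> bs = 1\<^sub>m (length bs) \<and>
    similar_over (subF q) (star_mat q (coeff_mat \<sigma> bs) * Ci) (diag_of_list (map (\<lambda>d. d ^ (q - 1)) ds))"
proof -
  define m where "m = length bs"
  have len: "length ws = m" "length ds = m" using K_basis_length_eq[OF bs ws(1)] ds(1) by (auto simp: m_def)
  have sub: "set ws \<subseteq> W" "set bs \<subseteq> W"
    using bs ws set_subset_K_span by (auto simp: K_basis_of_def)
  obtain A where A: "A \<in> carrier_mat m m" "elements_mat A \<subseteq> K"
      "\<And>i. i < m \<Longrightarrow> ws ! i = lincomb (\<lambda>j. A $$ (i, j)) bs"
    using exists_coord_mat[OF bs sub(1)] len by (auto simp: m_def)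
  obtain B where B: "B \<in> carrier_mat m m" "elements_mat B \<subseteq> K"
      "\<And>i. i < m \<Longrightarrow> bs ! i = lincomb (\<lambda>j. B $$ (i, j)) ws"
    using exists_coord_mat[OF ws(1) sub(2)] len by (auto simp: m_def)
  have AB: "A * B = 1\<^sub>m m" and BA: "B * A = 1\<^sub>m m"
    using coord_mats_inverse[OF A(1) B(1) A(2) B(2) _ len(1) _ A(3) B(3)]
      coord_mats_inverse[OF B(1) A(1) B(2) A(2) _ _ len(1) B(3) A(3)] bs ws(1)
    by (auto simp: K_basis_of_def m_def)
  define C D Di where "C = coeff_mat \<sigma> bs" and "D = diag_of_list ds" and "Di = diag_of_list (map inverse ds)"
  have "A * C * star_mat q A = D"
    using coeff_mat_change_basis[of A m bs ws] A len coeff_mat_orthogonal[OF ws(2)] ds(1)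
    by (simp add: C_def D_def m_def)
  moreover have "D * Di = 1\<^sub>m m" "Di * D = 1\<^sub>m m" using diag_of_list_inverse[OF ds(2)] len by (simp_all add: D_def Di_def)
  moreover have "C \<in> carrier_mat m m" "D \<in> carrier_mat m m" "Di \<in> carrier_mat m m"
    using len diag_of_list_carrier[of ds] diag_of_list_carrier[of "map inverse ds"]
    by (simp_all add: C_def D_def Di_def coeff_mat_def m_def)
  ultimately obtain Ci where Ci: "Ci \<in> carrier_mat m m" "C * Ci = 1\<^sub>m m" "Ci * C = 1\<^sub>m m"
      "star_mat q C * Ci = B * (star_mat q D * Di) * A"
    using star_conj_inverse_of_congruent[OF A(1) B(1) _ _ _ AB BA _ _ B(2)] by blast
  have "star_mat q D * Di = diag_of_list (map (\<lambda>d. d ^ (q - 1)) ds)"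
    using diag_of_list_power_mult_inverse[OF ds(2)] q_ge_2 by (simp add: D_def Di_def star_mat_diag_of_list)
  hence "similar_mat_wit (star_mat q C * Ci) (diag_of_list (map (\<lambda>d. d ^ (q - 1)) ds)) B A"
    using Ci A(1) B(1) AB BA len by (auto simp: similar_mat_wit_def Let_def)
  thus ?thesis using Ci A(2) B(2) unfolding similar_over_def C_def m_def K_def by blast
qed

lemma basis_of_orthogonal_separating:
  assumes "basis_K U vs" "set ws \<subseteq> U" "pairwise_orthogonal ws" "\<forall>i<length ws. \<sigma> (ws ! i) (ws ! i) \<noteq> 0"
    and separating: "\<And>u. u \<in> U \<Longrightarrow> \<forall>i<length ws. \<sigma> u (ws ! i) = 0 \<Longrightarrow> u = 0"
  shows "basis_K U ws"
proof -
  have indep: "indep_K ws" using assms(3,4) by (intro orthogonal_K_indep) (auto simp: pairwise_orthogonal_def)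
  have U: "U = span_K vs" "card U = card K ^ length vs"
    using assms(1) card_K_span by (auto simp: K_basis_of_def)
  have "card K ^ length ws = card (span_K ws)" using card_K_span[OF indep] by simp
  also have "\<dots> \<le> card U"
    using K_span_subset[OF _ assms(2)] U(1) K_subspace_K_span by (intro card_mono) auto
  finally have le: "length ws \<le> length vs" using U(2) card_K_ge_4 by simp
  define f where "f u = restrict (\<lambda>i. \<sigma> u (ws ! i)) {..<length ws}" for u
  have "inj_on f U"
  proof (rule inj_onI)
    fix u u' assume u: "u \<in> U" "u' \<in> U" and "f u = f u'"
    have "\<sigma> (u - u') (ws ! i) = 0" if "i < length ws" for i
      using that fun_cong[OF \<open>f u = f u'\<close>, of i] by (simp add: f_def sesq_diff_left)
    moreover have "u - u' \<in> U" using u U(1) K_subspace_diff[OF K_subspace_K_span] by simp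
    ultimately show "u = u'" using separating by fastforce
  qed
  moreover have "f ` U \<subseteq> coeff_vectors (length ws)"
    unfolding f_def coeff_vectors_def by (intro image_subsetI) (simp only: restrict_PiE_iff sesq_mem_K, blast)
  ultimately have "card U \<le> card K ^ length ws"
    using card_inj_on_le[OF _ _ finite_coeff_vectors] card_coeff_vectors by metis
  hence "length vs \<le> length ws" using U(2) card_K_ge_4 by simp
  hence "span_K ws = U" using K_span_eq_of_K_indep[OF assms(1,2) _ indep] le by simp
  thus ?thesis using indep by (simp add: K_basis_of_def)
qed

end

section \<open>Reduced forms\<close>

locale reduced_form = sesq_form q n K \<sigma> for q n K \<sigma> +
  fixes bs :: "'a list"
  assumes reduced_form_basis: "reduced_form_basis q \<sigma> bs"
begin

abbreviation R :: "'a set" where "R \<equiv> rad \<sigma> \<inter> rad (adj_form q \<sigma>)"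
abbreviation W :: "'a set" where "W \<equiv> span_K bs"

lemma basis_W: "basis_K W bs"
  and W_inter_R: "W \<inter> R = {0}"
  and W_plus_R: "{w + r | w r. w \<in> W \<and> r \<in> R} = UNIV"
  using reduced_form_basis by (simp_all add: reduced_form_basis_def Let_def K_basis_of_def)

lemma sesq_R_left: "r \<in> R \<Longrightarrow> \<sigma> r v = 0"
  and sesq_R_right: "r \<in> R \<Longrightarrow> \<sigma> v r = 0"
  by (simp_all add: mem_rad_iff mem_rad_adj_iff)

definition W_proj :: "'a \<Rightarrow> 'a" where
  "W_proj x = (SOME w. w \<in> W \<and> x - w \<in> R)"

lemma W_proj: "W_proj x \<in> W" "x - W_proj x \<in> R"
proof -
  obtain w r where "w \<in> W" "r \<in> R" "x = w + r" using W_plus_R by blast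
  hence "\<exists>w. w \<in> W \<and> x - w \<in> R" by auto
  from someI_ex[OF this] show "W_proj x \<in> W" "x - W_proj x \<in> R" by (simp_all add: W_proj_def)
qed

lemma sesq_W_proj_left: "\<sigma> (W_proj x) y = \<sigma> x y"
  and sesq_W_proj_right: "\<sigma> y (W_proj x) = \<sigma> y x"
proof -
  have "\<sigma> (x - W_proj x) y = 0" "\<sigma> y (x - W_proj x) = 0"
    using W_proj(2) by (simp_all only: sesq_R_left sesq_R_right)
  thus "\<sigma> (W_proj x) y = \<sigma> x y" "\<sigma> y (W_proj x) = \<sigma> y x" by (simp_all add: sesq_diff_left sesq_diff_right)
qed

lemma nondegenerate_on_W:
  assumes "rad \<sigma> = rad (adj_form q \<sigma>)"
  shows "nondegenerate_on W"
  unfolding nondegenerate_on_def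
proof (intro ballI impI)
  fix u assume u: "u \<in> W" and orth: "\<forall>v\<in>W. \<sigma> u v = 0"
  have "\<sigma> u y = 0" for y
    using orth W_proj[of y] sesq_R_right[of "y - W_proj y" u] by (simp add: sesq_diff_right)
  hence "u \<in> rad \<sigma>" by (simp add: mem_rad_iff)
  hence "u \<in> R" using assms by simp
  thus "u = 0" using u W_inter_R by blast
qed

lemma orthogonal_basis_W_of_diag:
  assumes es: "basis_K UNIV es" "pairwise_orthogonal es" and rad: "rad \<sigma> = rad (adj_form q \<sigma>)"
    and ds: "mset (filter (\<lambda>x. x \<noteq> 0) (map (\<lambda>e. \<sigma> e e) es)) = mset ds"
  shows "\<exists>ws. basis_K W ws \<and> pairwise_orthogonal ws \<and> map (\<lambda>w. \<sigma> w w) ws = ds"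
proof -
  have "filter (\<lambda>x. x \<noteq> 0) (map (\<lambda>e. \<sigma> e e) es) = map (\<lambda>e. \<sigma> e e) (filter (\<lambda>e. \<sigma> e e \<noteq> 0) es)"
    by (simp add: filter_map comp_def)
  hence "mset (map (\<lambda>e. \<sigma> e e) (filter (\<lambda>e. \<sigma> e e \<noteq> 0) es)) = mset ds" using ds by metis
  from mset_map_eq_obtain[OF this] obtain ys
    where ys: "mset ys = mset (filter (\<lambda>e. \<sigma> e e \<noteq> 0) es)" "map (\<lambda>e. \<sigma> e e) ys = ds"
    by blast
  have "distinct es" using es(1) K_indep_distinct by (simp add: K_basis_of_def)
  hence "distinct ys" using ys(1) by (metis distinct_filter mset_eq_imp_distinct_iff)
  have set_ys: "set ys = {e \<in> set es. \<sigma> e e \<noteq> 0}" using mset_eq_setD[OF ys(1)] by simp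
  define ws where "ws = map W_proj ys"
  have "\<sigma> (ws ! i) (ws ! j) = 0" if "i < length ws" "j < length ws" "i \<noteq> j" for i j
  proof -
    have "ys ! i \<noteq> ys ! j" "ys ! i \<in> set es" "ys ! j \<in> set es"
      using that \<open>distinct ys\<close> set_ys nth_mem[of _ ys] by (auto simp: ws_def nth_eq_iff_index_eq)
    then obtain i' j' where "i' < length es" "j' < length es" "i' \<noteq> j'" "ys ! i = es ! i'" "ys ! j = es ! j'"
      by (metis in_set_conv_nth)
    thus ?thesis using es(2) that by (auto simp: pairwise_orthogonal_def ws_def sesq_W_proj_left sesq_W_proj_right)
  qed
  hence orth: "pairwise_orthogonal ws" by (simp add: pairwise_orthogonal_def)
  have diag: "map (\<lambda>w. \<sigma> w w) ws = ds"
    using ys(2) by (simp add: ws_def comp_def sesq_W_proj_left sesq_W_proj_right)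
  have "u = 0" if u: "u \<in> W" "\<forall>i<length ws. \<sigma> u (ws ! i) = 0" for u
  proof -
    have "\<sigma> u e = 0" if "e \<in> set es" for e
    proof (cases "\<sigma> e e = 0")
      case True
      have "\<sigma> e' e = 0" if "e' \<in> set es" for e'
        using es(2) \<open>e \<in> set es\<close> that True by (cases "e' = e") (auto simp: pairwise_orthogonal_def in_set_conv_nth)
      thus ?thesis using sesq_zero_iff_on_basis(2)[OF es(1), of e] by auto
    next
      case False
      hence "e \<in> set ys" using set_ys \<open>e \<in> set es\<close> by simp
      then obtain k where "k < length ws" "ys ! k = e" by (auto simp: ws_def in_set_conv_nth)
      thus ?thesis using u(2) by (auto simp: ws_def sesq_W_proj_right)
    qed
    hence "u \<in> rad \<sigma>" using sesq_zero_iff_on_basis(1)[OF es(1), of u] by (simp add: mem_rad_iff)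
    thus "u = 0" using rad u(1) W_inter_R by auto
  qed
  moreover have "set ws \<subseteq> W" using W_proj(1) by (auto simp: ws_def)
  moreover have "\<forall>i<length ws. \<sigma> (ws ! i) (ws ! i) \<noteq> 0"
  proof (intro allI impI)
    fix i assume "i < length ws"
    hence "ys ! i \<in> set ys" by (simp add: ws_def)
    thus "\<sigma> (ws ! i) (ws ! i) \<noteq> 0"
      using set_ys \<open>i < length ws\<close> by (simp add: ws_def sesq_W_proj_left sesq_W_proj_right)
  qed
  ultimately have "basis_K W ws" using orth by (rule_tac basis_of_orthogonal_separating[OF basis_W]) auto
  thus ?thesis using orth diag by blast
qed

lemma has_diag_coeff_mat_imp_similar:
  assumes "has_diag_coeff_mat q \<sigma> ds"
  shows "rad \<sigma> = rad (adj_form q \<sigma>) \<and>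
    (\<exists>Ci. Ci \<in> carrier_mat (length bs) (length bs) \<and>
      coeff_mat \<sigma> bs * Ci = 1\<^sub>m (length bs) \<and> Ci * coeff_mat \<sigma> bs = 1\<^sub>m (length bs) \<and>
      similar_over (subF q) (star_mat q (coeff_mat \<sigma> bs) * Ci) (diag_of_list (map (\<lambda>d. d ^ (q - 1)) ds)))"
proof -
  obtain es where es: "basis_K UNIV es" "diagonal_mat (coeff_mat \<sigma> es)"
      "mset (filter (\<lambda>x. x \<noteq> 0) (map (\<lambda>i. \<sigma> (es ! i) (es ! i)) [0..<length es])) = mset ds"
    using assms by (auto simp: has_diag_coeff_mat_def)
  have orth: "pairwise_orthogonal es" using es(2) by (simp add: diagonal_mat_coeff_mat_iff)
  have rad: "rad \<sigma> = rad (adj_form q \<sigma>)" by (rule rad_eq_of_orthogonal_basis[OF es(1) orth])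
  have "map (\<lambda>i. \<sigma> (es ! i) (es ! i)) [0..<length es] = map (\<lambda>e. \<sigma> e e) es"
    by (rule nth_equalityI) auto
  hence ds: "mset (filter (\<lambda>x. x \<noteq> 0) (map (\<lambda>e. \<sigma> e e) es)) = mset ds" using es(3) by simp
  hence "0 \<notin> set ds" by (metis (mono_tags) mem_Collect_eq set_filter set_mset_mset)
  moreover obtain ws where "basis_K W ws" "pairwise_orthogonal ws" "map (\<lambda>w. \<sigma> w w) ws = ds"
    using orthogonal_basis_W_of_diag[OF es(1) orth rad ds] by blast
  ultimately show ?thesis using rad conj_inverse_similar_of_orthogonal_basis[OF basis_W] by blast
qed

lemma adj_eigenvector_of_basis_W:
  assumes "basis_K W vs" "\<And>y. y \<in> set vs \<Longrightarrow> \<sigma> y v ^ q = e * \<sigma> v y"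
  shows "adj_eigenvector e v"
  unfolding adj_eigenvector_iff
proof
  fix y
  have "W_proj y \<in> span_K vs" using W_proj(1) assms(1) by (simp add: K_basis_of_def)
  hence "\<sigma> (W_proj y) v ^ q = e * \<sigma> v (W_proj y)" using adj_eigenvector_K_span assms(2) by blast
  thus "\<sigma> y v ^ q = e * \<sigma> v y" by (simp add: sesq_W_proj_left sesq_W_proj_right)
qed

lemma adj_eigenbasis_W_of_similar:
  assumes rad: "rad \<sigma> = rad (adj_form q \<sigma>)" and "set ds \<subseteq> K"
    and Ci: "Ci \<in> carrier_mat (length bs) (length bs)" "Ci * coeff_mat \<sigma> bs = 1\<^sub>m (length bs)"
    and sim: "similar_over (subF q) (star_mat q (coeff_mat \<sigma> bs) * Ci) (diag_of_list (map (\<lambda>d. d ^ (q - 1)) ds))"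
  shows "\<exists>vs. adj_eigenbasis W vs ds"
proof -
  define m C D where "m = length bs" and "C = coeff_mat \<sigma> bs" and "D = diag_of_list (map (\<lambda>d. d ^ (q - 1)) ds)"
  obtain P Q where PQ: "similar_mat_wit (star_mat q C * Ci) D P Q" "elements_mat P \<subseteq> K" "elements_mat Q \<subseteq> K"
    using sim by (auto simp: similar_over_def K_def C_def D_def)
  have C: "C \<in> carrier_mat m m" by (simp add: C_def coeff_mat_def m_def)
  hence "dim_row (star_mat q C * Ci) = m" by simp
  hence carr: "D \<in> carrier_mat m m" "P \<in> carrier_mat m m" "Q \<in> carrier_mat m m"
    and inv: "P * Q = 1\<^sub>m m" "Q * P = 1\<^sub>m m" and eq: "star_mat q C * Ci = P * D * Q"
    using PQ(1) unfolding similar_mat_wit_def Let_def by auto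
  have "dim_row D = m" using carr(1) by blast
  hence len: "length ds = m" by (simp add: D_def)
  define vs where "vs = map (\<lambda>i. lincomb (\<lambda>k. Q $$ (i, k)) bs) [0..<m]"
  have vs: "basis_K W vs" "length vs = m"
    unfolding vs_def m_def by (rule K_basis_transform[OF basis_W _ _ PQ(2,3)]) (use carr inv in \<open>simp_all add: m_def\<close>)
  have vs_nth: "vs ! i = lincomb (\<lambda>k. Q $$ (i, k)) bs" if "i < m" for i
    using that by (simp add: vs_def)
  have "coeff_mat \<sigma> vs = Q * C * star_mat q Q"
    unfolding C_def by (rule coeff_mat_change_basis) (use carr(3) PQ(3) vs(2) vs_nth in \<open>simp_all add: m_def\<close>)
  hence star_C1: "star_mat q (coeff_mat \<sigma> vs) = D * coeff_mat \<sigma> vs"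
    using star_congruent_of_similar[OF C Ci(1)[folded m_def] carr(2,3,1) _ inv(2) PQ(3) eq] Ci(2)
    by (simp add: C_def m_def)
  have rel: "\<sigma> (vs ! j) (vs ! i) ^ q = (ds ! i) ^ (q - 1) * \<sigma> (vs ! i) (vs ! j)" if "i < m" "j < m" for i j
    using arg_cong[of _ _ "\<lambda>X. X $$ (i, j)", OF star_C1] that vs(2) len
      index_diag_of_list_mult[of "coeff_mat \<sigma> vs" "map (\<lambda>d. d ^ (q - 1)) ds" m i j]
    by (simp add: D_def coeff_mat_def index_star_mat)
  have eig: "adj_eigenvector ((ds ! i) ^ (q - 1)) (vs ! i)" if "i < m" for i
    using rel[OF that] vs by (intro adj_eigenvector_of_basis_W) (auto simp: in_set_conv_nth)
  have "ds ! i \<noteq> 0" if i: "i < m" for i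
  proof
    assume "ds ! i = 0"
    hence "\<sigma> y (vs ! i) ^ q = 0" for y using eig[OF i] q_ge_2 by (simp add: adj_eigenvector_iff)
    hence "vs ! i \<in> R" using rad q_ge_2 by (simp add: mem_rad_adj_iff)
    moreover have "vs ! i \<in> W" using vs i nth_mem_K_span[of i vs] by (simp add: K_basis_of_def)
    ultimately show False using W_inter_R K_indep_nth_nonzero[of vs i] vs i by (auto simp: K_basis_of_def)
  qed
  thus ?thesis using vs eig len \<open>set ds \<subseteq> K\<close> by (auto simp: adj_eigenbasis_def intro!: exI[of _ vs])
qed

lemma basis_UNIV_append:
  assumes ws: "basis_K W ws" and rs: "basis_K R rs"
  shows "basis_K UNIV (ws @ rs)"
proof -
  have "x \<in> span_K (ws @ rs)" for x
  proof -
    obtain w r where "w \<in> W" "r \<in> R" "x = w + r" using W_plus_R by blast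
    moreover have "W \<subseteq> span_K (ws @ rs)" "R \<subseteq> span_K (ws @ rs)"
      using ws rs K_span_append(1)[of ws rs] K_span_append(2)[of rs ws] by (simp_all add: K_basis_of_def)
    ultimately show ?thesis using K_subspace_add[OF K_subspace_K_span] by blast
  qed
  hence span: "span_K (ws @ rs) = UNIV" by auto
  have "card (UNIV :: 'a set) = card W * card R"
    using card_direct_sum[OF K_subspace_K_span K_subspace_rad_inter W_inter_R W_plus_R] .
  also have "\<dots> = card K ^ length (ws @ rs)"
    using ws rs card_K_span[of ws] card_K_span[of rs] by (simp add: K_basis_of_def power_add)
  finally have "indep_K (ws @ rs)" using span by (intro K_indep_of_card_K_span) simp
  thus ?thesis using span by (simp add: K_basis_of_def)
qed

lemma has_diag_coeff_mat_of_adj_eigenbasis: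
  assumes rad: "rad \<sigma> = rad (adj_form q \<sigma>)" and eb: "adj_eigenbasis W vs ds"
  shows "has_diag_coeff_mat q \<sigma> ds"
proof -
  obtain ws where ws: "length ws = length ds" "set ws \<subseteq> W" "pairwise_orthogonal ws"
      "\<forall>i<length ds. \<sigma> (ws ! i) (ws ! i) = ds ! i"
    using exists_orthogonal_with_values[OF eb nondegenerate_on_W[OF rad]] by blast
  have ds: "length ds = length bs" "0 \<notin> set ds"
    using eb K_basis_length_eq[OF basis_W] by (auto simp: adj_eigenbasis_def in_set_conv_nth)
  have diag_ws: "map (\<lambda>w. \<sigma> w w) ws = ds" using ws(1,4) by (intro nth_equalityI) auto
  have "indep_K ws" using ws ds(2) by (intro orthogonal_K_indep) (auto simp: pairwise_orthogonal_def, metis nth_mem)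
  hence basis_ws: "basis_K W ws"
    using K_span_eq_of_K_indep[OF basis_W ws(2)] ws(1) ds(1) by (simp add: K_basis_of_def)
  obtain rs where rs: "basis_K R rs" using exists_K_basis[OF K_subspace_rad_inter] by blast
  have rs_R: "set rs \<subseteq> R" using rs set_subset_K_span by (auto simp: K_basis_of_def)
  define es where "es = ws @ rs"
  have es_R: "es ! k \<in> R" if "length ws \<le> k" "k < length es" for k
    using that rs_R nth_mem[of "k - length ws" rs] by (auto simp: es_def nth_append)
  have "\<sigma> (es ! i) (es ! j) = 0" if "i < length es" "j < length es" "i \<noteq> j" for i j
  proof (cases "i < length ws \<and> j < length ws")
    case True
    thus ?thesis using ws(1,3) that(3) by (simp add: pairwise_orthogonal_def es_def nth_append)
  qed (use that es_R sesq_R_left sesq_R_right in \<open>meson not_le\<close>)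
  hence "pairwise_orthogonal es" by (simp add: pairwise_orthogonal_def)
  moreover have "mset (filter (\<lambda>x. x \<noteq> 0) (map (\<lambda>i. \<sigma> (es ! i) (es ! i)) [0..<length es])) = mset ds"
  proof -
    have "map (\<lambda>i. \<sigma> (es ! i) (es ! i)) [0..<length es] = ds @ map (\<lambda>r. \<sigma> r r) rs"
      using diag_ws by (intro nth_equalityI) (auto simp: es_def nth_append)
    moreover have "filter (\<lambda>x. x \<noteq> 0) (map (\<lambda>r. \<sigma> r r) rs) = []"
      using rs_R sesq_R_left by (auto simp: filter_empty_conv)
    moreover have "filter (\<lambda>x. x \<noteq> 0) ds = ds" using ds(2) by (auto simp: filter_id_conv)
    ultimately show ?thesis by simp
  qed
  ultimately show ?thesis using basis_UNIV_append[OF basis_ws rs]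
    by (auto simp: has_diag_coeff_mat_def diagonal_mat_coeff_mat_iff es_def)
qed

end

theorem corollary2p7:
  fixes \<sigma> :: "'a::{finite, field} \<Rightarrow> 'a \<Rightarrow> 'a"
    and q n :: nat and bs ds :: "'a list" and C :: "'a mat"
  assumes "prime_power q" and "n > 0" and "card (UNIV :: 'a set) = q ^ (2 * n)"
    and "sesquilinear q \<sigma>"
    and "reduced_form_basis q \<sigma> bs"
    and "C = coeff_mat \<sigma> bs"
    and "set ds \<subseteq> subF q"
  shows "has_diag_coeff_mat q \<sigma> ds \<longleftrightarrow>
           (rad \<sigma> = rad (adj_form q \<sigma>) \<and>
            (\<exists>Ci. Ci \<in> carrier_mat (length bs) (length bs) \<and>
                  C * Ci = 1\<^sub>m (length bs) \<and> Ci * C = 1\<^sub>m (length bs) \<and>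
                  similar_over (subF q) (star_mat q C * Ci)
                    (diag_of_list (map (\<lambda>d. d ^ (q - 1)) ds))))"
proof -
  interpret reduced_form q n "subF q" \<sigma> bs
    using assms(1-5) by unfold_locales simp_all
  show ?thesis
  proof
    assume "has_diag_coeff_mat q \<sigma> ds"
    thus "rad \<sigma> = rad (adj_form q \<sigma>) \<and> (\<exists>Ci. Ci \<in> carrier_mat (length bs) (length bs) \<and>
        C * Ci = 1\<^sub>m (length bs) \<and> Ci * C = 1\<^sub>m (length bs) \<and>
        similar_over (subF q) (star_mat q C * Ci) (diag_of_list (map (\<lambda>d. d ^ (q - 1)) ds)))"
      unfolding assms(6) by (rule has_diag_coeff_mat_imp_similar)
  next
    assume "rad \<sigma> = rad (adj_form q \<sigma>) \<and> (\<exists>Ci. Ci \<in> carrier_mat (length bs) (length bs) \<and>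
        C * Ci = 1\<^sub>m (length bs) \<and> Ci * C = 1\<^sub>m (length bs) \<and>
        similar_over (subF q) (star_mat q C * Ci) (diag_of_list (map (\<lambda>d. d ^ (q - 1)) ds)))"
    then obtain Ci where rad: "rad \<sigma> = rad (adj_form q \<sigma>)"
      and Ci: "Ci \<in> carrier_mat (length bs) (length bs)" "Ci * C = 1\<^sub>m (length bs)"
        "similar_over (subF q) (star_mat q C * Ci) (diag_of_list (map (\<lambda>d. d ^ (q - 1)) ds))"
      by blast
    obtain vs where "adj_eigenbasis W vs ds"
      using adj_eigenbasis_W_of_similar[OF rad assms(7) Ci[unfolded assms(6)]] by blast
    thus "has_diag_coeff_mat q \<sigma> ds" by (rule has_diag_coeff_mat_of_adj_eigenbasis[OF rad])
  qed
qed

end
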